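(* Let $M$ be a smooth 3-manifold with a smooth contact sub-Riemannian structure $(D,g)$, let $S\subset M$ be an embedded $C^2$ surface, and let $p\in S$ be a characteristic point. Near $p$ let $(X_1,X_2)$ be an oriented $g$-orthonormal frame of $D$, $X_0$ a vector field transverse to $D$, and $f$ a $C^2$ submersion with $S=f^{-1}(0)$ locally. For $\varepsilon>0$ let $g^\varepsilon$ be the Riemannian metric for which $(\varepsilon X_0,X_1,X_2)$ is orthonormal. Then, as $\varepsilon\to0$, $$\det \mathrm{II}^\varepsilon(p)=\frac{1}{\varepsilon^2}\left(\frac{\det\operatorname{Hess}_H f(p)}{(X_0f(p))^2}-\frac{(c^0_{12}(p))^2}{4}\right)+O(1).$$
   Context: A point $p\in S$ is characteristic if $T_pS=D_p$ (then $X_0f(p)\neq0$). The structure functions $c^k_{ij}$ are defined by $[X_j,X_i]=c^1_{ij}X_1+c^2_{ij}X_2+c^0_{ij}X_0$; in particular $c^0_{12}$ is the $X_0$-coefficient of $[X_2,X_1]$. $\operatorname{Hess}_Hf=\begin{pmatrix}X_1X_1f & X_1X_2f\\ X_2X_1f & X_2X_2f\end{pmatrix}$. With $\overline\nabla^\varepsilon$ the Levi-Civita connection of $g^\varepsilon$, the second fundamental form of $S$ is $\mathrm{II}^\varepsilon(X,Y)=$ the $g^\varepsilon$-normal component of $\overline\nabla^\varepsilon_XY$, and for any frame $(X,Y)$ of $TS$, $\det\mathrm{II}^\varepsilon=\dfrac{\langle\mathrm{II}^\varepsilon(X,X),\mathrm{II}^\varepsilon(Y,Y)\rangle_{g^\varepsilon}-\langle\mathrm{II}^\varepsilon(X,Y),\mathrm{II}^\varepsilon(X,Y)\rangle_{g^\varepsilon}}{|X|^2_{g^\varepsilon}|Y|^2_{g^\varepsilon}-\langle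 X,Y\rangle^2_{g^\varepsilon}}$ (independent of the frame). *)

theory Defs
  imports "HOL-Analysis.Analysis" "HOL-Library.Landau_Symbols"
begin

text \<open>Everything is local near the characteristic point, so the 3-manifold is
represented by a coordinate chart: an open set U of real^3. Vector fields are maps
real^3 \<Rightarrow> real^3, functions are maps real^3 \<Rightarrow> real.\<close>

definition dderiv :: "(real^3 \<Rightarrow> 'a::real_normed_vector) \<Rightarrow> real^3 \<Rightarrow> real^3 \<Rightarrow> 'a" where
  "dderiv h x v = frechet_derivative h (at x) v"

definition vf_app :: "(real^3 \<Rightarrow> real^3) \<Rightarrow> (real^3 \<Rightarrow> real) \<Rightarrow> real^3 \<Rightarrow> real" where
  "vf_app X h x = dderiv h x (X x)"

fun Ck_on :: "nat \<Rightarrow> (real^3 \<Rightarrow> 'a::real_normed_vector) \<Rightarrow> (real^3) set \<Rightarrow> bool" where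
  "Ck_on 0 h U = continuous_on U h"
| "Ck_on (Suc k) h U =
     ((\<forall>x\<in>U. h differentiable (at x)) \<and> (\<forall>i. Ck_on k (\<lambda>x. dderiv h x (axis i 1)) U))"

definition smooth_on :: "(real^3 \<Rightarrow> 'a::real_normed_vector) \<Rightarrow> (real^3) set \<Rightarrow> bool" where
  "smooth_on h U = (\<forall>k. Ck_on k h U)"

text \<open>Lie bracket [X,Y] (so that [X,Y]h = X(Yh) - Y(Xh)).\<close>
definition lie :: "(real^3 \<Rightarrow> real^3) \<Rightarrow> (real^3 \<Rightarrow> real^3) \<Rightarrow> real^3 \<Rightarrow> real^3" where
  "lie X Y x = dderiv Y x (X x) - dderiv X x (Y x)"

definition c012 :: "(real^3 \<Rightarrow> real^3) \<Rightarrow> (real^3 \<Rightarrow> real^3) \<Rightarrow> (real^3 \<Rightarrow> real^3) \<Rightarrow> real^3 \<Rightarrow> real" where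
  "c012 X0 X1 X2 x = (THE c0. \<exists>c1 c2. lie X2 X1 x = c1 *\<^sub>R X1 x + c2 *\<^sub>R X2 x + c0 *\<^sub>R X0 x)"

definition detHessH :: "(real^3 \<Rightarrow> real) \<Rightarrow> (real^3 \<Rightarrow> real^3) \<Rightarrow> (real^3 \<Rightarrow> real^3) \<Rightarrow> real^3 \<Rightarrow> real" where
  "detHessH f X1 X2 x =
     vf_app X1 (vf_app X1 f) x * vf_app X2 (vf_app X2 f) x
     - vf_app X1 (vf_app X2 f) x * vf_app X2 (vf_app X1 f) x"

text \<open>Coordinate matrix of the Riemannian metric g^eps for which (eps X0, X1, X2)
is orthonormal: with F the matrix whose columns are eps X0, X1, X2, the Gram matrix
is (F^-1)^T F^-1.\<close>
definition frame_mat :: "real \<Rightarrow> (real^3 \<Rightarrow> real^3) \<Rightarrow> (real^3 \<Rightarrow> real^3) \<Rightarrow> (real^3 \<Rightarrow> real^3) \<Rightarrow> real^3 \<Rightarrow> real^3^3" where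
  "frame_mat eps X0 X1 X2 x =
     (\<chi> i j. if j = 1 then eps * (X0 x $ i) else if j = 2 then X1 x $ i else X2 x $ i)"

definition gmetric :: "real \<Rightarrow> (real^3 \<Rightarrow> real^3) \<Rightarrow> (real^3 \<Rightarrow> real^3) \<Rightarrow> (real^3 \<Rightarrow> real^3) \<Rightarrow> real^3 \<Rightarrow> real^3^3" where
  "gmetric eps X0 X1 X2 x =
     transpose (matrix_inv (frame_mat eps X0 X1 X2 x)) ** matrix_inv (frame_mat eps X0 X1 X2 x)"

definition gip :: "(real^3 \<Rightarrow> real^3^3) \<Rightarrow> real^3 \<Rightarrow> real^3 \<Rightarrow> real^3 \<Rightarrow> real" where
  "gip G x u v = u \<bullet> (G x *v v)"

definition christ :: "(real^3 \<Rightarrow> real^3^3) \<Rightarrow> real^3 \<Rightarrow> 3 \<Rightarrow> 3 \<Rightarrow> 3 \<Rightarrow> real" where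
  "christ G x k i j = (1/2) * (\<Sum>l\<in>UNIV. matrix_inv (G x) $ k $ l *
      (dderiv (\<lambda>y. G y $ j $ l) x (axis i 1) + dderiv (\<lambda>y. G y $ i $ l) x (axis j 1)
       - dderiv (\<lambda>y. G y $ i $ j) x (axis l 1)))"

definition LC_conn :: "(real^3 \<Rightarrow> real^3^3) \<Rightarrow> (real^3 \<Rightarrow> real^3) \<Rightarrow> (real^3 \<Rightarrow> real^3) \<Rightarrow> real^3 \<Rightarrow> real^3" where
  "LC_conn G X Y x = dderiv Y x (X x)
     + (\<chi> k. \<Sum>i\<in>UNIV. \<Sum>j\<in>UNIV. christ G x k i j * (X x $ i) * (Y x $ j))"

definition tspace :: "(real^3 \<Rightarrow> real) \<Rightarrow> real^3 \<Rightarrow> (real^3) set" where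
  "tspace f x = {v. dderiv f x v = 0}"

definition ncomp :: "(real^3 \<Rightarrow> real^3^3) \<Rightarrow> (real^3 \<Rightarrow> real) \<Rightarrow> real^3 \<Rightarrow> real^3 \<Rightarrow> real^3" where
  "ncomp G f x w = (THE n. w - n \<in> tspace f x \<and> (\<forall>t\<in>tspace f x. gip G x n t = 0))"

definition sff :: "(real^3 \<Rightarrow> real^3^3) \<Rightarrow> (real^3 \<Rightarrow> real) \<Rightarrow> (real^3 \<Rightarrow> real^3) \<Rightarrow> (real^3 \<Rightarrow> real^3) \<Rightarrow> real^3 \<Rightarrow> real^3" where
  "sff G f X Y x = ncomp G f x (LC_conn G X Y x)"

definition detII :: "(real^3 \<Rightarrow> real^3^3) \<Rightarrow> (real^3 \<Rightarrow> real) \<Rightarrow> (real^3 \<Rightarrow> real^3) \<Rightarrow> (real^3 \<Rightarrow> real^3) \<Rightarrow> real^3 \<Rightarrow> real" where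
  "detII G f X Y x =
     (gip G x (sff G f X X x) (sff G f Y Y x) - gip G x (sff G f X Y x) (sff G f X Y x))
     / (gip G x (X x) (X x) * gip G x (Y x) (Y x) - (gip G x (X x) (Y x))^2)"

end

theory Submission
  imports Defs
begin

text \<open>At a characteristic point \<open>T\<^sub>pS = D\<^sub>p\<close>, so the \<open>g\<^sup>\<epsilon>\<close>-dual of \<open>grad f\<close> is
  \<open>N = \<epsilon>\<^sup>2 (X\<^sub>0f) X\<^sub>0\<close>, and the second fundamental form is
  \<open>II\<^sup>\<epsilon>(Y,Z) = (\<langle>grad f, \<nabla>\<^sup>\<epsilon>\<^sub>YZ\<rangle> / X\<^sub>0f) X\<^sub>0\<close>, a multiple of a vector of \<open>g\<^sup>\<epsilon>\<close>-length \<open>1/\<epsilon>\<close>.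
  Differentiating \<open>Zf = 0\<close> along \<open>S\<close> turns \<open>\<langle>grad f, \<nabla>\<^sup>\<epsilon>\<^sub>YZ\<rangle>\<close> into the bilinear form
  \<open>-Hess f(Y,Z) + \<Gamma>\<^sup>\<epsilon>(Y,Z)\<close>, where \<open>\<Gamma>\<^sup>\<epsilon>\<close> is the contraction of the Christoffel symbols with \<open>grad f\<close>.
  Computing \<open>\<Gamma>\<^sup>\<epsilon>\<close> in the frame \<open>(X\<^sub>0, X\<^sub>1, X\<^sub>2)\<close> shows that on \<open>X\<^sub>1, X\<^sub>2\<close> this form is the
  symmetrised horizontal Hessian \<open>-(X\<^sub>iX\<^sub>jf + X\<^sub>jX\<^sub>if)/2\<close> up to \<open>O(\<epsilon>\<^sup>2)\<close>. Hence \<open>det II\<^sup>\<epsilon>\<close> is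
  \<open>1/(\<epsilon>X\<^sub>0f)\<^sup>2\<close> times the determinant of the symmetrised Hessian, up to \<open>O(1)\<close>; since
  \<open>X\<^sub>1f = X\<^sub>2f = 0\<close> at \<open>p\<close>, its antisymmetric part is \<open>[X\<^sub>2,X\<^sub>1]f/2 = c\<^sup>0\<^sub>1\<^sub>2 X\<^sub>0f/2\<close>, which produces
  the term \<open>(c\<^sup>0\<^sub>1\<^sub>2)\<^sup>2/4\<close>.\<close>

section \<open>Derivatives\<close>

lemma dderiv_eqI: "(h has_derivative h') (at x) \<Longrightarrow> dderiv h x = h'"
  unfolding dderiv_def by (rule frechet_derivative_at[symmetric])

lemma has_derivative_dderiv: "h differentiable (at x) \<Longrightarrow> (h has_derivative dderiv h x) (at x)"
  unfolding dderiv_def using frechet_derivative_works by blast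

lemma linear_dderiv: "h differentiable (at x) \<Longrightarrow> linear (dderiv h x)"
  using has_derivative_dderiv has_derivative_linear by blast

lemma has_derivative_vec_nth:
  "(Z has_derivative DZ) F \<Longrightarrow> ((\<lambda>x. Z x $ k) has_derivative (\<lambda>u. DZ u $ k)) F"
  by (rule bounded_linear.has_derivative[OF bounded_linear_vec_nth])

lemma linear_axis_expansion:
  fixes L :: "real^'n \<Rightarrow> 'b::real_vector"
  assumes "linear L"
  shows "L v = (\<Sum>k\<in>UNIV. v$k *\<^sub>R L (axis k 1))"
proof -
  have "L v = L (\<Sum>k\<in>UNIV. v$k *\<^sub>R axis k 1)"
    using basis_expansion[of v] by (simp add: scalar_mult_eq_scaleR)
  also have "\<dots> = (\<Sum>k\<in>UNIV. v$k *\<^sub>R L (axis k 1))"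
    using assms by (simp add: linear_sum linear_scale)
  finally show ?thesis .
qed

lemma dderiv_expansion:
  assumes "f differentiable (at x)"
  shows "dderiv f x z = (\<Sum>k\<in>UNIV. z $ k * dderiv f x (axis k 1))"
  using linear_axis_expansion[OF linear_dderiv[OF assms], of z] by simp

lemma second_difference_mvt:
  fixes f g :: "'a::real_normed_vector \<Rightarrow> real"
  assumes f': "\<forall>x\<in>U. (f has_derivative f' x) (at x)"
    and g_eq: "\<forall>x\<in>U. g x = f' x a"
    and segment: "\<And>s r. 0 \<le> s \<Longrightarrow> s \<le> t \<Longrightarrow> 0 \<le> r \<Longrightarrow> r \<le> t \<Longrightarrow> p + s *\<^sub>R a + r *\<^sub>R b \<in> U"
    and t: "0 < t"
  obtains \<xi> where "0 < \<xi>" "\<xi> < t"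
    "f (p + t *\<^sub>R a + t *\<^sub>R b) - f (p + t *\<^sub>R a) - f (p + t *\<^sub>R b) + f p
       = t * (g (p + \<xi> *\<^sub>R a + t *\<^sub>R b) - g (p + \<xi> *\<^sub>R a))"
proof -
  define \<phi> where "\<phi> s = f (p + s *\<^sub>R a + t *\<^sub>R b) - f (p + s *\<^sub>R a)" for s
  have der: "(\<phi> has_derivative (\<lambda>h. h * (g (p + s *\<^sub>R a + t *\<^sub>R b) - g (p + s *\<^sub>R a))))
      (at s within {0..t})" if "0 \<le> s" "s \<le> t" for s
  proof -
    have x1: "p + s *\<^sub>R a + t *\<^sub>R b \<in> U" and x2: "p + s *\<^sub>R a \<in> U"
      using segment[of s t] segment[of s 0] that t by auto
    have line1: "((\<lambda>s. p + s *\<^sub>R a + t *\<^sub>R b) has_derivative (\<lambda>h. h *\<^sub>R a)) (at s within {0..t})"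
      and line2: "((\<lambda>s. p + s *\<^sub>R a) has_derivative (\<lambda>h. h *\<^sub>R a)) (at s within {0..t})"
      by (auto intro!: derivative_eq_intros)
    have "(\<phi> has_derivative (\<lambda>h. f' (p + s *\<^sub>R a + t *\<^sub>R b) (h *\<^sub>R a) - f' (p + s *\<^sub>R a) (h *\<^sub>R a)))
        (at s within {0..t})"
      unfolding \<phi>_def
      using has_derivative_in_compose[OF line1, of f] has_derivative_in_compose[OF line2, of f] f' x1 x2
      by (auto simp: o_def has_derivative_at_withinI intro: has_derivative_diff)
    moreover have "linear (f' (p + s *\<^sub>R a + t *\<^sub>R b))" "linear (f' (p + s *\<^sub>R a))"
      using f' x1 x2 has_derivative_linear by blast+
    ultimately show ?thesis using g_eq x1 x2 by (simp add: linear_scale algebra_simps)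
  qed
  obtain \<xi> where "0 < \<xi>" "\<xi> < t"
    "\<phi> t - \<phi> 0 = t * (g (p + \<xi> *\<^sub>R a + t *\<^sub>R b) - g (p + \<xi> *\<^sub>R a))"
    using mvt_simple[of 0 t \<phi>, OF t der] by auto
  then show ?thesis using that by (simp add: \<phi>_def algebra_simps)
qed

text \<open>The second difference is \<open>t\<^sup>2 \<partial>\<^sub>b\<partial>\<^sub>af(p) + o(t\<^sup>2)\<close>: the mean value theorem in direction \<open>a\<close>,
  followed by the differentiability of \<open>\<partial>\<^sub>af\<close> at \<open>p\<close>.\<close>
lemma second_difference_estimate:
  fixes f g :: "'a::real_normed_vector \<Rightarrow> real"
  assumes U: "open U" "p \<in> U"
    and f': "\<forall>x\<in>U. (f has_derivative f' x) (at x)"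
    and g_eq: "\<forall>x\<in>U. g x = f' x a"
    and G: "(g has_derivative G) (at p)"
    and a: "norm a \<le> 1" and b: "norm b \<le> 1" and e: "e > 0"
  shows "\<exists>d>0. \<forall>t. 0 < t \<and> t < d \<longrightarrow>
     \<bar>f (p + t *\<^sub>R a + t *\<^sub>R b) - f (p + t *\<^sub>R a) - f (p + t *\<^sub>R b) + f p - t^2 * G b\<bar> \<le> 4*e*t^2"
proof -
  obtain d0 where d0: "d0 > 0" "ball p d0 \<subseteq> U" using U openE by blast
  obtain d1 where d1: "d1 > 0"
    "\<forall>y. norm (y - p) < d1 \<longrightarrow> norm (g y - g p - G (y - p)) \<le> e * norm (y - p)"
    using G e unfolding has_derivative_at_alt by blast
  have small: "norm (s *\<^sub>R a + r *\<^sub>R b) \<le> s + r" if "0 \<le> s" "0 \<le> r" for s r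
    using norm_triangle_ineq[of "s *\<^sub>R a" "r *\<^sub>R b"] mult_left_le[OF a, of s] mult_left_le[OF b, of r] that
    by simp
  have "\<bar>f (p + t *\<^sub>R a + t *\<^sub>R b) - f (p + t *\<^sub>R a) - f (p + t *\<^sub>R b) + f p - t^2 * G b\<bar> \<le> 4*e*t^2"
    if t: "0 < t" "2 * t < min d0 d1" for t
  proof -
    have "p + s *\<^sub>R a + r *\<^sub>R b \<in> U" if "0 \<le> s" "s \<le> t" "0 \<le> r" "r \<le> t" for s r
    proof -
      have "dist p (p + s *\<^sub>R a + r *\<^sub>R b) = norm (s *\<^sub>R a + r *\<^sub>R b)"
        using dist_add_cancel[of p 0 "s *\<^sub>R a + r *\<^sub>R b"] by (simp add: add.assoc)
      then show ?thesis using small[of s r] that t d0 by auto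
    qed
    then obtain \<xi> where \<xi>: "0 < \<xi>" "\<xi> < t" and mvt:
      "f (p + t *\<^sub>R a + t *\<^sub>R b) - f (p + t *\<^sub>R a) - f (p + t *\<^sub>R b) + f p
         = t * (g (p + \<xi> *\<^sub>R a + t *\<^sub>R b) - g (p + \<xi> *\<^sub>R a))"
      using second_difference_mvt[OF f' g_eq _ t(1)] by blast
    let ?X = "g (p + \<xi> *\<^sub>R a + t *\<^sub>R b) - g (p + \<xi> *\<^sub>R a)"
    have "norm (\<xi> *\<^sub>R a) = \<xi> * norm a" using \<xi> by simp
    then have "norm (\<xi> *\<^sub>R a + t *\<^sub>R b) \<le> 2 * t" "norm (\<xi> *\<^sub>R a) \<le> t"
      using small[of \<xi> t] mult_left_le[OF a, of \<xi>] \<xi> by linarith+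
    then have "\<bar>g (p + \<xi> *\<^sub>R a + t *\<^sub>R b) - g p - G (\<xi> *\<^sub>R a + t *\<^sub>R b)\<bar> \<le> e * (2 * t)"
      and "\<bar>g (p + \<xi> *\<^sub>R a) - g p - G (\<xi> *\<^sub>R a)\<bar> \<le> e * t"
      using d1(2)[rule_format, of "p + \<xi> *\<^sub>R a + t *\<^sub>R b"] d1(2)[rule_format, of "p + \<xi> *\<^sub>R a"] t e
      by (auto simp: add.assoc intro: order_trans mult_left_mono)
    moreover have "G (\<xi> *\<^sub>R a + t *\<^sub>R b) = G (\<xi> *\<^sub>R a) + t * G b"
      using G by (simp add: linear_add linear_scale has_derivative_linear)
    ultimately have "\<bar>?X - t * G b\<bar> \<le> 3 * e * t"
      by linarith
    then have "t * \<bar>?X - t * G b\<bar> \<le> t * (3 * e * t)"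
      by (rule mult_left_mono) (use t in simp)
    moreover have "\<bar>t * ?X - t^2 * G b\<bar> = t * \<bar>?X - t * G b\<bar>"
    proof -
      have "t * ?X - t^2 * G b = t * (?X - t * G b)" by (simp add: power2_eq_square algebra_simps)
      then show ?thesis using t by (metis abs_mult abs_of_pos)
    qed
    ultimately show ?thesis
      unfolding mvt using e by (simp add: power2_eq_square mult_ac)
  qed
  then show ?thesis
    by (intro exI[of _ "min d0 d1 / 2"]) (use d0 d1 in auto)
qed

lemma dderiv_partial_commute:
  fixes f :: "real^3 \<Rightarrow> real"
  assumes U: "open U" "p \<in> U"
    and f: "\<forall>x\<in>U. f differentiable (at x)"
    and fa: "(\<lambda>x. dderiv f x a) differentiable (at p)"
    and fb: "(\<lambda>x. dderiv f x b) differentiable (at p)"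
    and a: "norm a \<le> 1" and b: "norm b \<le> 1"
  shows "dderiv (\<lambda>x. dderiv f x b) p a = dderiv (\<lambda>x. dderiv f x a) p b"
proof (rule ccontr)
  let ?A = "dderiv (\<lambda>x. dderiv f x a) p b" and ?B = "dderiv (\<lambda>x. dderiv f x b) p a"
  assume ne: "?B \<noteq> ?A"
  define e where "e = \<bar>?A - ?B\<bar> / 16"
  have e: "e > 0" using ne by (simp add: e_def)
  have f': "\<forall>x\<in>U. (f has_derivative dderiv f x) (at x)" using f has_derivative_dderiv by blast
  obtain d1 where d1: "d1 > 0" "\<forall>t. 0 < t \<and> t < d1 \<longrightarrow>
     \<bar>f (p + t *\<^sub>R a + t *\<^sub>R b) - f (p + t *\<^sub>R a) - f (p + t *\<^sub>R b) + f p - t^2 * ?A\<bar> \<le> 4*e*t^2"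
    using second_difference_estimate[OF U f' _ has_derivative_dderiv[OF fa] a b e] by auto
  obtain d2 where d2: "d2 > 0" "\<forall>t. 0 < t \<and> t < d2 \<longrightarrow>
     \<bar>f (p + t *\<^sub>R b + t *\<^sub>R a) - f (p + t *\<^sub>R b) - f (p + t *\<^sub>R a) + f p - t^2 * ?B\<bar> \<le> 4*e*t^2"
    using second_difference_estimate[OF U f' _ has_derivative_dderiv[OF fb] b a e] by auto
  define t where "t = min d1 d2 / 2"
  have t: "0 < t" "t < d1" "t < d2" using d1 d2 by (auto simp: t_def)
  have "p + t *\<^sub>R b + t *\<^sub>R a = p + t *\<^sub>R a + t *\<^sub>R b" by (simp add: algebra_simps)
  then have "\<bar>t^2 * ?A - t^2 * ?B\<bar> \<le> 8 * e * t^2"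
    using d1(2)[rule_format, of t] d2(2)[rule_format, of t] t by (simp only:) argo
  moreover have "\<bar>t^2 * ?A - t^2 * ?B\<bar> = t^2 * (16 * e)"
    by (simp add: e_def right_diff_distrib[symmetric] abs_mult)
  ultimately show False using e t by simp
qed

lemma norm_scaleR_add_le:
  fixes v w :: "'a::real_normed_vector"
  assumes "\<bar>s\<bar> \<le> t"
  shows "norm (t *\<^sub>R v + s *\<^sub>R w) \<le> t * (norm v + norm w + 1)"
proof -
  have "norm (t *\<^sub>R v + s *\<^sub>R w) \<le> t * norm v + \<bar>s\<bar> * norm w"
    using norm_triangle_ineq[of "t *\<^sub>R v" "s *\<^sub>R w"] assms by simp
  also have "\<bar>s\<bar> * norm w \<le> t * norm w" by (rule mult_right_mono) (use assms in simp_all)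
  finally show ?thesis using assms by (simp add: algebra_simps)
qed

lemma level_set_meets_transversal_segment:
  fixes f :: "'a::real_normed_vector \<Rightarrow> real"
  assumes V: "open V" "p \<in> V" and f_cont: "continuous_on V f"
    and f': "(f has_derivative f') (at p)" and f_p: "f p = 0"
    and w: "f' w = 1" and v: "f' v = 0" and e: "0 < e" "e \<le> 1"
  shows "\<exists>d>0. \<forall>t. 0 < t \<and> t < d \<longrightarrow>
           (\<exists>s. \<bar>s\<bar> \<le> e * t \<and> p + t *\<^sub>R v + s *\<^sub>R w \<in> V \<and> f (p + t *\<^sub>R v + s *\<^sub>R w) = 0)"
proof -
  define K where "K = norm v + norm w + 1"
  have K: "K > 0" unfolding K_def using norm_ge_zero[of v] norm_ge_zero[of w] by linarith
  obtain d0 where d0: "d0 > 0" "ball p d0 \<subseteq> V" using V openE by blast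
  obtain d1 where d1: "d1 > 0"
    "\<forall>y. norm (y - p) < d1 \<longrightarrow> norm (f y - f p - f' (y - p)) \<le> e / (2 * K) * norm (y - p)"
    using conjunct2[OF f'[unfolded has_derivative_at_alt], rule_format, of "e / (2 * K)"] e K
    by (auto intro: divide_pos_pos)
  have "\<exists>s. \<bar>s\<bar> \<le> e * t \<and> p + t *\<^sub>R v + s *\<^sub>R w \<in> V \<and> f (p + t *\<^sub>R v + s *\<^sub>R w) = 0"
    if t: "0 < t" "t * K < d0" "t * K < d1" for t
  proof -
    define y where "y s = p + t *\<^sub>R v + s *\<^sub>R w" for s
    have "e * t \<le> t" using e t by (simp add: mult_left_le_one_le)
    then have near: "norm (y s - p) \<le> t * K" if "\<bar>s\<bar> \<le> e * t" for s
      using norm_scaleR_add_le[of s t v w] that by (simp add: y_def K_def)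
    have in_V: "y s \<in> V" if "\<bar>s\<bar> \<le> e * t" for s
      using near[OF that] t d0 by (auto simp: dist_norm norm_minus_commute)
    have approx: "\<bar>f (y s) - s\<bar> \<le> e * t / 2" if "\<bar>s\<bar> \<le> e * t" for s
    proof -
      have "f' (y s - p) = s"
        using f' v w by (simp add: y_def linear_add linear_scale has_derivative_linear)
      moreover have "norm (y s - p) < d1" using near[OF that] t by linarith
      ultimately have "\<bar>f (y s) - s\<bar> \<le> e / (2 * K) * norm (y s - p)"
        using d1(2)[rule_format, of "y s"] f_p by simp
      also have "\<dots> \<le> e / (2 * K) * (t * K)"
        using near[OF that] e K by (intro mult_left_mono) auto
      finally show ?thesis using K by simp
    qed
    have et: "0 < e * t" using e t by simp
    have "f (y (- (e * t))) \<le> 0" "0 \<le> f (y (e * t))"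
      using abs_le_D1[OF approx[of "- (e * t)"]] abs_le_D2[OF approx[of "e * t"]] et by simp_all
    moreover have "continuous_on {- (e * t)..e * t} (\<lambda>s. f (y s))"
      using in_V by (intro continuous_on_compose2[OF f_cont]) (auto simp: y_def intro!: continuous_intros)
    ultimately obtain s where "- (e * t) \<le> s" "s \<le> e * t" "f (y s) = 0"
      using IVT'[of "\<lambda>s. f (y s)" "- (e * t)" 0 "e * t"] et by auto
    moreover from this have "\<bar>s\<bar> \<le> e * t" by (simp add: abs_le_iff)
    ultimately show ?thesis using in_V[of s] by (auto simp: y_def)
  qed
  moreover have "t * K < d0" "t * K < d1" if "t < min d0 d1 / K" for t
    using that K by (simp_all add: pos_less_divide_eq)
  ultimately show ?thesis
    by (intro exI[of _ "min d0 d1 / K"]) (use K d0 d1 in auto)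
qed

lemma level_set_derivative_estimate:
  fixes f h :: "'a::real_normed_vector \<Rightarrow> real"
  assumes V: "open V" "p \<in> V" and f_cont: "continuous_on V f"
    and f': "(f has_derivative f') (at p)" and f_p: "f p = 0"
    and w: "f' w = 1" and v: "f' v = 0"
    and h': "(h has_derivative h') (at p)"
    and h_zero: "\<forall>x\<in>V. f x = 0 \<longrightarrow> h x = 0"
    and e: "0 < e" "e \<le> 1" and \<eta>: "0 < \<eta>"
  shows "\<bar>h' v\<bar> \<le> e * \<bar>h' w\<bar> + \<eta> * (norm v + norm w + 1)"
proof -
  define K where "K = norm v + norm w + 1"
  have K: "K > 0" unfolding K_def using norm_ge_zero[of v] norm_ge_zero[of w] by linarith
  obtain d where d: "d > 0" and zero: "\<forall>t. 0 < t \<and> t < d \<longrightarrow>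
      (\<exists>s. \<bar>s\<bar> \<le> e * t \<and> p + t *\<^sub>R v + s *\<^sub>R w \<in> V \<and> f (p + t *\<^sub>R v + s *\<^sub>R w) = 0)"
    using level_set_meets_transversal_segment[OF V f_cont f' f_p w v e] by blast
  obtain d1 where d1: "d1 > 0"
    "\<forall>y. norm (y - p) < d1 \<longrightarrow> norm (h y - h p - h' (y - p)) \<le> \<eta> * norm (y - p)"
    using conjunct2[OF h'[unfolded has_derivative_at_alt], rule_format, OF \<eta>] by blast
  define t where "t = min (d / 2) (d1 / (2 * K))"
  have t: "0 < t" "t < d" "t * K < d1"
  proof -
    show "0 < t" "t < d" using d d1 K by (auto simp: t_def)
    have "t * (2 * K) \<le> d1" using K by (simp add: t_def flip: pos_le_divide_eq)
    then show "t * K < d1" using mult_pos_pos[OF \<open>0 < t\<close> K] by simp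
  qed
  then obtain s where s: "\<bar>s\<bar> \<le> e * t" "p + t *\<^sub>R v + s *\<^sub>R w \<in> V" "f (p + t *\<^sub>R v + s *\<^sub>R w) = 0"
    using zero by blast
  have "e * t \<le> t" using e t by (simp add: mult_left_le_one_le)
  then have near: "norm (t *\<^sub>R v + s *\<^sub>R w) \<le> t * K"
    using norm_scaleR_add_le[of s t v w] s(1) by (simp add: K_def)
  have "h (p + t *\<^sub>R v + s *\<^sub>R w) = 0" "h p = 0" using h_zero s V f_p by auto
  moreover have "h' (t *\<^sub>R v + s *\<^sub>R w) = t * h' v + s * h' w"
    using h' by (simp add: linear_add linear_scale has_derivative_linear)
  ultimately have "\<bar>t * h' v + s * h' w\<bar> \<le> \<eta> * norm (t *\<^sub>R v + s *\<^sub>R w)"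
    using d1(2)[rule_format, of "p + t *\<^sub>R v + s *\<^sub>R w"] near t by (simp add: add.assoc)
  also have "\<dots> \<le> \<eta> * (t * K)" using near \<eta> by (intro mult_left_mono) auto
  finally have "\<bar>t * h' v + s * h' w\<bar> \<le> t * (\<eta> * K)" by (simp add: mult_ac)
  moreover have "\<bar>s * h' w\<bar> \<le> t * (e * \<bar>h' w\<bar>)"
    using mult_right_mono[OF s(1), of "\<bar>h' w\<bar>"] by (simp add: abs_mult mult_ac)
  moreover have "t * \<bar>h' v\<bar> \<le> \<bar>t * h' v + s * h' w\<bar> + \<bar>s * h' w\<bar>"
    using abs_triangle_ineq4[of "t * h' v + s * h' w" "s * h' w"] t by (simp add: abs_mult)
  ultimately have "t * \<bar>h' v\<bar> \<le> t * (e * \<bar>h' w\<bar> + \<eta> * K)" by (simp add: distrib_left)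
  then show ?thesis using t by (simp add: K_def mult_le_cancel_left_pos)
qed

lemma has_derivative_vanishing_on_level_set:
  fixes f h :: "'a::real_normed_vector \<Rightarrow> real"
  assumes V: "open V" "p \<in> V" and f_cont: "continuous_on V f"
    and f': "(f has_derivative f') (at p)" and f_p: "f p = 0"
    and w: "f' w \<noteq> 0" and v: "f' v = 0"
    and h': "(h has_derivative h') (at p)"
    and h_zero: "\<forall>x\<in>V. f x = 0 \<longrightarrow> h x = 0"
  shows "h' v = 0"
proof -
  define w1 where "w1 = (1 / f' w) *\<^sub>R w"
  have w1: "f' w1 = 1" using w f' by (simp add: w1_def linear_scale has_derivative_linear)
  define C where "C = \<bar>h' w1\<bar> + norm v + norm w1 + 1"
  have C: "C > 0" unfolding C_def using norm_ge_zero[of v] norm_ge_zero[of w1] abs_ge_zero[of "h' w1"]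
    by linarith
  have "\<bar>h' v\<bar> \<le> 0 + \<delta>" if "\<delta> > 0" for \<delta>
  proof -
    define e where "e = min 1 (\<delta> / C)"
    have e: "0 < e" "e \<le> 1" "e \<le> \<delta> / C" using that C by (auto simp: e_def)
    have "\<bar>h' v\<bar> \<le> e * \<bar>h' w1\<bar> + e * (norm v + norm w1 + 1)"
      by (rule level_set_derivative_estimate[OF V f_cont f' f_p w1 v h' h_zero e(1,2) e(1)])
    also have "\<dots> = e * C" by (simp add: C_def algebra_simps)
    also have "\<dots> \<le> \<delta>" using e(3) C by (simp add: pos_le_divide_eq)
    finally show ?thesis by simp
  qed
  then show ?thesis using field_le_epsilon[of "\<bar>h' v\<bar>" 0] by simp
qed

definition hessian_form :: "(real^3 \<Rightarrow> real) \<Rightarrow> real^3 \<Rightarrow> real^3 \<Rightarrow> real^3 \<Rightarrow> real" where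
  "hessian_form f p u z = (\<Sum>k\<in>UNIV. z $ k * dderiv (\<lambda>x. dderiv f x (axis k 1)) p u)"

lemma has_derivative_dderiv_along:
  fixes f :: "real^3 \<Rightarrow> real" and Z :: "real^3 \<Rightarrow> real^3"
  assumes U: "open U" "p \<in> U"
    and f: "\<forall>x\<in>U. f differentiable (at x)"
    and f_partials: "\<forall>k. (\<lambda>x. dderiv f x (axis k 1)) differentiable (at p)"
    and Z: "(Z has_derivative DZ) (at p)"
  shows "((\<lambda>x. dderiv f x (Z x)) has_derivative
           (\<lambda>u. dderiv f p (DZ u) + hessian_form f p u (Z p))) (at p)"
proof -
  have "((\<lambda>x. \<Sum>k\<in>UNIV. Z x $ k * dderiv f x (axis k 1)) has_derivative
      (\<lambda>u. \<Sum>k\<in>UNIV. Z p $ k * dderiv (\<lambda>x. dderiv f x (axis k 1)) p u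
                     + DZ u $ k * dderiv f p (axis k 1))) (at p)"
    using f_partials
    by (intro has_derivative_sum has_derivative_mult[OF has_derivative_vec_nth[OF Z] has_derivative_dderiv])
      blast
  moreover have "(\<Sum>k\<in>UNIV. Z p $ k * dderiv (\<lambda>x. dderiv f x (axis k 1)) p u
                     + DZ u $ k * dderiv f p (axis k 1))
      = dderiv f p (DZ u) + hessian_form f p u (Z p)" for u
    using dderiv_expansion[of f p "DZ u"] f U
    by (simp add: hessian_form_def sum.distrib add.commute)
  ultimately have "((\<lambda>x. \<Sum>k\<in>UNIV. Z x $ k * dderiv f x (axis k 1)) has_derivative
      (\<lambda>u. dderiv f p (DZ u) + hessian_form f p u (Z p))) (at p)"
    by simp
  moreover have "(\<Sum>k\<in>UNIV. Z x $ k * dderiv f x (axis k 1)) = dderiv f x (Z x)" if "x \<in> U" for x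
    using dderiv_expansion[of f x "Z x"] f that by simp
  ultimately show ?thesis
    by (rule has_derivative_transform_within_open[OF _ U])
qed

lemma hessian_form_commute:
  fixes f :: "real^3 \<Rightarrow> real"
  assumes U: "open U" "p \<in> U"
    and f: "\<forall>x\<in>U. f differentiable (at x)"
    and f_partials: "\<forall>k. (\<lambda>x. dderiv f x (axis k 1)) differentiable (at p)"
  shows "hessian_form f p u z = hessian_form f p z u"
proof -
  let ?D = "\<lambda>k. dderiv (\<lambda>x. dderiv f x (axis k 1)) p"
  have D: "?D k v = (\<Sum>i\<in>UNIV. v $ i * ?D k (axis i 1))" for k v
    using dderiv_expansion f_partials by blast
  have sym: "?D k (axis i 1) = ?D i (axis k 1)" for i k
    by (rule dderiv_partial_commute[OF U f]) (use f_partials in auto)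
  have "hessian_form f p u z = (\<Sum>k\<in>UNIV. \<Sum>i\<in>UNIV. z $ k * u $ i * ?D k (axis i 1))"
    unfolding hessian_form_def D[of _ u] by (simp add: sum_distrib_left mult.assoc)
  also have "\<dots> = (\<Sum>i\<in>UNIV. \<Sum>k\<in>UNIV. u $ i * z $ k * ?D i (axis k 1))"
    by (subst sum.swap) (simp add: sym mult.commute)
  also have "\<dots> = hessian_form f p z u"
    unfolding hessian_form_def D[of _ z] by (simp add: sum_distrib_left mult.assoc)
  finally show ?thesis .
qed

lemma bilinear_hessian_form:
  assumes "\<forall>k. (\<lambda>x. dderiv f x (axis k 1)) differentiable (at p)"
  shows "bilinear (hessian_form f p)"
proof -
  have "linear (dderiv (\<lambda>x. dderiv f x (axis k 1)) p)" for k
    using assms linear_dderiv by blast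
  then show ?thesis
    unfolding bilinear_def linear_iff hessian_form_def
    by (simp add: sum.distrib sum_distrib_left linear_add linear_scale algebra_simps)
qed

section \<open>Matrices\<close>

lemma matrix_inv_mult:
  fixes M :: "'a::semiring_1^'n^'n"
  assumes "invertible M"
  shows "M ** matrix_inv M = mat 1" "matrix_inv M ** M = mat 1"
proof -
  have "\<exists>M'. M ** M' = mat 1 \<and> M' ** M = mat 1" using assms by (simp add: invertible_def)
  then have "M ** matrix_inv M = mat 1 \<and> matrix_inv M ** M = mat 1"
    unfolding matrix_inv_def by (rule someI_ex)
  then show "M ** matrix_inv M = mat 1" "matrix_inv M ** M = mat 1" by auto
qed

lemma matrix_inv_mult_vec:
  fixes M :: "'a::comm_semiring_1^'n^'n"
  assumes "invertible M"
  shows "M *v (matrix_inv M *v x) = x" "matrix_inv M *v (M *v x) = x"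
  using matrix_inv_mult[OF assms] by (simp_all add: matrix_vector_mul_assoc)

lemma matrix_inv_unique:
  fixes M B :: "real^'n^'n"
  assumes "M ** B = mat 1"
  shows "matrix_inv M = B"
proof -
  have "B ** M = mat 1" using assms matrix_left_right_inverse by blast
  then have inv: "invertible M" using assms invertible_def by blast
  have "matrix_inv M = matrix_inv M ** (M ** B)" by (simp add: assms)
  also have "\<dots> = (matrix_inv M ** M) ** B" by (simp add: matrix_mul_assoc)
  finally show ?thesis using matrix_inv_mult[OF inv] by simp
qed

lemma frame_mat_mult_vec:
  "frame_mat eps X0 X1 X2 x *v z = (z$1 * eps) *\<^sub>R X0 x + z$2 *\<^sub>R X1 x + z$3 *\<^sub>R X2 x"
  by (simp add: vec_eq_iff frame_mat_def matrix_vector_mult_def sum_3 algebra_simps)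

lemma frame_mat_invertible:
  assumes eps: "eps \<noteq> 0"
    and indep: "\<forall>a b. a *\<^sub>R X1 x + b *\<^sub>R X2 x = 0 \<longrightarrow> a = 0 \<and> b = 0"
    and transverse: "X0 x \<notin> span {X1 x, X2 x}"
  shows "invertible (frame_mat eps X0 X1 X2 x)"
proof -
  have "z = 0" if z: "frame_mat eps X0 X1 X2 x *v z = 0" for z
  proof -
    have e: "(z$1 * eps) *\<^sub>R X0 x + z$2 *\<^sub>R X1 x + z$3 *\<^sub>R X2 x = 0"
      using z by (simp add: frame_mat_mult_vec)
    have sum0: "(z$1 * eps) *\<^sub>R X0 x = - (z$2 *\<^sub>R X1 x + z$3 *\<^sub>R X2 x)"
      by (rule iffD2[OF eq_neg_iff_add_eq_0]) (use e in \<open>simp add: add.assoc\<close>)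
    have "z$1 = 0"
    proof (rule ccontr)
      assume "z$1 \<noteq> 0"
      have "(z$1 * eps) *\<^sub>R X0 x \<in> span {X1 x, X2 x}"
        unfolding sum0 by (intro span_neg span_add span_mul span_base) auto
      then have "(1 / (z$1 * eps)) *\<^sub>R ((z$1 * eps) *\<^sub>R X0 x) \<in> span {X1 x, X2 x}"
        by (rule span_mul)
      then show False using transverse \<open>z$1 \<noteq> 0\<close> eps by simp
    qed
    then have "z$2 *\<^sub>R X1 x + z$3 *\<^sub>R X2 x = 0" using e by simp
    then have "z$2 = 0 \<and> z$3 = 0" using indep by blast
    with \<open>z$1 = 0\<close> show "z = 0" by (simp add: vec_eq_iff forall_3)
  qed
  then show ?thesis
    using matrix_left_invertible_ker invertible_left_inverse by blast
qed

lemma differentiable_prod_at: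
  fixes f :: "'i \<Rightarrow> 'a::real_normed_vector \<Rightarrow> real"
  assumes "finite I" "\<forall>i\<in>I. f i differentiable (at p)"
  shows "(\<lambda>x. \<Prod>i\<in>I. f i x) differentiable (at p)"
  using assms by (induction I rule: finite_induct) (auto intro!: differentiable_mult)

lemma differentiable_det:
  fixes M :: "'a::real_normed_vector \<Rightarrow> real^'n^'n"
  assumes "\<forall>i j. (\<lambda>x. M x $ i $ j) differentiable (at p)"
  shows "(\<lambda>x. det (M x)) differentiable (at p)"
  unfolding det_def
  by (intro differentiable_sum ballI differentiable_mult differentiable_const differentiable_prod_at)
     (use assms finite_permutations in auto)

lemma matrix_inv_cramer:
  fixes M :: "real^'n^'n"
  assumes "invertible M"
  shows "matrix_inv M $ k $ j = det (\<chi> i l. if l = k then axis j 1 $ i else M $ i $ l) / det M"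
proof -
  have "det M \<noteq> 0" using assms invertible_det_nz by blast
  moreover have "M *v (matrix_inv M *v axis j 1) = axis j 1"
    by (rule matrix_inv_mult_vec[OF assms])
  ultimately have "matrix_inv M *v axis j 1
      = (\<chi> k. det (\<chi> i l. if l = k then axis j 1 $ i else M $ i $ l) / det M)"
    using cramer by blast
  then have "(matrix_inv M *v axis j 1) $ k = det (\<chi> i l. if l = k then axis j 1 $ i else M $ i $ l) / det M"
    by simp
  then show ?thesis by (simp add: matrix_vector_mult_basis column_def)
qed

lemma differentiable_matrix_inv_entry:
  fixes M :: "'a::real_normed_vector \<Rightarrow> real^'n^'n"
  assumes U: "open U" "p \<in> U" and inv: "\<forall>y\<in>U. invertible (M y)"
    and M: "\<forall>i j. (\<lambda>y. M y $ i $ j) differentiable (at p)"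
  shows "(\<lambda>y. matrix_inv (M y) $ k $ j) differentiable (at p)"
proof -
  have "(\<lambda>y. det (\<chi> i l. if l = k then axis j 1 $ i else M y $ i $ l)) differentiable (at p)"
  proof (rule differentiable_det, intro allI)
    fix i l
    show "(\<lambda>y. (\<chi> i l. if l = k then axis j 1 $ i else M y $ i $ l) $ i $ l) differentiable (at p)"
      by (cases "l = k") (use M in auto)
  qed
  moreover have "det (M p) \<noteq> 0" using inv U invertible_det_nz by blast
  ultimately have "(\<lambda>y. det (\<chi> i l. if l = k then axis j 1 $ i else M y $ i $ l) / det (M y))
      differentiable (at p)"
    by (intro differentiable_divide differentiable_det[OF M])
  then obtain D where "((\<lambda>y. det (\<chi> i l. if l = k then axis j 1 $ i else M y $ i $ l) / det (M y))
      has_derivative D) (at p)"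
    unfolding differentiable_def by blast
  then have "((\<lambda>y. matrix_inv (M y) $ k $ j) has_derivative D) (at p)"
    by (rule has_derivative_transform_within_open[OF _ U]) (use inv in \<open>simp add: matrix_inv_cramer\<close>)
  then show ?thesis unfolding differentiable_def by blast
qed

definition matrix_inv_deriv :: "(real^3 \<Rightarrow> real^'n^'n) \<Rightarrow> real^3 \<Rightarrow> real^3 \<Rightarrow> real^'n^'n" where
  "matrix_inv_deriv M p h = (\<chi> k j. dderiv (\<lambda>y. matrix_inv (M y) $ k $ j) p h)"

text \<open>The entries of \<open>M\<^sup>-\<^sup>1\<close> are differentiable by Cramer's rule; the formula comes from
  differentiating \<open>M\<^sup>-\<^sup>1 M = 1\<close>.\<close>
lemma has_derivative_matrix_inv:
  fixes M :: "real^3 \<Rightarrow> real^'n^'n"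
  assumes U: "open U" "p \<in> U" and inv: "\<forall>y\<in>U. invertible (M y)"
    and M: "\<forall>i j. ((\<lambda>y. M y $ i $ j) has_derivative (\<lambda>h. DM h $ i $ j)) (at p)"
  shows "((\<lambda>y. matrix_inv (M y) $ k $ j) has_derivative (\<lambda>h. matrix_inv_deriv M p h $ k $ j)) (at p)"
    and "matrix_inv_deriv M p h = - (matrix_inv (M p) ** DM h ** matrix_inv (M p))"
proof -
  let ?A = "\<lambda>y. matrix_inv (M y)" and ?DA = "matrix_inv_deriv M p h"
  have "\<forall>i j. (\<lambda>y. M y $ i $ j) differentiable (at p)" using M differentiable_def by blast
  then have A: "((\<lambda>y. ?A y $ k $ j) has_derivative (\<lambda>h. matrix_inv_deriv M p h $ k $ j)) (at p)" for k j
    unfolding matrix_inv_deriv_def using has_derivative_dderiv[OF differentiable_matrix_inv_entry[OF U inv]]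
    by simp
  then show "((\<lambda>y. ?A y $ k $ j) has_derivative (\<lambda>h. matrix_inv_deriv M p h $ k $ j)) (at p)" .
  have "(?DA ** M p + ?A p ** DM h) $ i $ j = 0" for i j
  proof -
    have "((\<lambda>y. \<Sum>k\<in>UNIV. ?A y $ i $ k * M y $ k $ j) has_derivative
        (\<lambda>h. \<Sum>k\<in>UNIV. ?A p $ i $ k * DM h $ k $ j + matrix_inv_deriv M p h $ i $ k * M p $ k $ j)) (at p)"
      by (rule has_derivative_sum) (rule has_derivative_mult[OF A], use M in blast)
    moreover have one: "(\<Sum>k\<in>UNIV. ?A y $ i $ k * M y $ k $ j) = mat 1 $ i $ j" if "y \<in> U" for y
    proof -
      have "(?A y ** M y) $ i $ j = mat 1 $ i $ j" using matrix_inv_mult(2)[of "M y"] inv that by simp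
      then show ?thesis by (simp add: matrix_matrix_mult_def)
    qed
    have "((\<lambda>y. \<Sum>k\<in>UNIV. ?A y $ i $ k * M y $ k $ j) has_derivative (\<lambda>h. 0)) (at p)"
      by (rule has_derivative_transform_within_open[OF has_derivative_const U]) (use one in auto)
    ultimately have "(\<lambda>h. \<Sum>k\<in>UNIV. ?A p $ i $ k * DM h $ k $ j + matrix_inv_deriv M p h $ i $ k * M p $ k $ j)
        = (\<lambda>h. 0)"
      by (rule has_derivative_unique)
    then show ?thesis by (simp add: matrix_matrix_mult_def sum.distrib add.commute fun_eq_iff)
  qed
  then have DA_M: "?DA ** M p = - (?A p ** DM h)"
    by (simp add: vec_eq_iff eq_neg_iff_add_eq_0)
  have "?DA = ?DA ** (M p ** ?A p)" using matrix_inv_mult(1)[of "M p"] inv U by simp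
  also have "\<dots> = (?DA ** M p) ** ?A p" by (simp add: matrix_mul_assoc)
  also have "\<dots> = - (?A p ** DM h ** ?A p)"
    unfolding DA_M by (simp add: vec_eq_iff matrix_matrix_mult_def sum_negf)
  finally show "?DA = - (matrix_inv (M p) ** DM h ** matrix_inv (M p))" .
qed

lemma inner_matrix_vector_mult: "(x::real^'n) \<bullet> (M *v y) = (transpose M *v x) \<bullet> y"
  by (simp add: dot_lmul_matrix)

lemma transpose_add: "transpose (A + B) = transpose A + transpose (B::'a::semiring_1^'n^'m)"
  by (simp add: vec_eq_iff transpose_def)

lemma gram_matrix_pos:
  fixes A :: "real^'n^'n"
  assumes "invertible A" "z \<noteq> 0"
  shows "z \<bullet> ((transpose A ** A) *v z) > 0"
proof -
  have "z \<bullet> ((transpose A ** A) *v z) = z \<bullet> (transpose A *v (A *v z))"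
    by (simp only: matrix_vector_mul_assoc)
  also have "\<dots> = (A *v z) \<bullet> (A *v z)" by (subst inner_matrix_vector_mult) simp
  finally have "z \<bullet> ((transpose A ** A) *v z) = (A *v z) \<bullet> (A *v z)" .
  moreover have "A *v z \<noteq> 0"
    using matrix_inv_mult_vec(2)[OF assms(1), of z] assms(2) by auto
  ultimately show ?thesis by simp
qed

lemma gram_matrix_inv:
  fixes A :: "real^'n^'n"
  assumes "invertible A"
  shows "matrix_inv (transpose A ** A) = matrix_inv A ** transpose (matrix_inv A)"
    and "invertible (transpose A ** A)"
proof -
  let ?B = "matrix_inv A"
  have "(transpose A ** A) ** (?B ** transpose ?B) = transpose A ** (A ** ?B) ** transpose ?B"
    by (simp add: matrix_mul_assoc)
  also have "\<dots> = transpose A ** transpose ?B" using matrix_inv_mult[OF assms] by simp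
  also have "\<dots> = transpose (?B ** A)" by (simp only: matrix_transpose_mul)
  also have "\<dots> = mat 1" using matrix_inv_mult[OF assms] by simp
  finally have 1: "(transpose A ** A) ** (?B ** transpose ?B) = mat 1" .
  then show "matrix_inv (transpose A ** A) = ?B ** transpose ?B" by (rule matrix_inv_unique)
  show "invertible (transpose A ** A)" using 1 matrix_left_right_inverse invertible_def by blast
qed

lemma span_pair_cases:
  assumes "x \<in> span {a, b}"
  obtains s t where "x = s *\<^sub>R a + t *\<^sub>R b"
  using assms by (auto simp: span_insert span_singleton) (metis add.commute diff_eq_eq)

lemma bilinear_det_change_of_basis:
  fixes B :: "'a::real_vector \<Rightarrow> 'a \<Rightarrow> real"
  assumes B: "bilinear B" and sym: "B y x = B x y"
  shows "B (a *\<^sub>R x + b *\<^sub>R y) (a *\<^sub>R x + b *\<^sub>R y) * B (c *\<^sub>R x + d *\<^sub>R y) (c *\<^sub>R x + d *\<^sub>R y)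
           - (B (a *\<^sub>R x + b *\<^sub>R y) (c *\<^sub>R x + d *\<^sub>R y))^2
         = (a * d - b * c)^2 * (B x x * B y y - (B x y)^2)"
  using B by (simp add: bilinear_ladd bilinear_radd bilinear_lmul bilinear_rmul sym power2_eq_square
      algebra_simps)

section \<open>The metrics \<open>g\<^sup>\<epsilon>\<close>\<close>

definition grad :: "(real^3 \<Rightarrow> real) \<Rightarrow> real^3 \<Rightarrow> real^3" where
  "grad f p = (\<chi> k. dderiv f p (axis k 1))"

lemma dderiv_eq_inner_grad:
  assumes "f differentiable (at p)"
  shows "dderiv f p z = grad f p \<bullet> z"
  using dderiv_expansion[OF assms, of z] by (simp add: grad_def inner_vec_def mult.commute)

text \<open>\<open>N\<close> is the \<open>G\<close>-gradient of \<open>f\<close>, so the \<open>G\<close>-normal component is the projection onto \<open>N\<close>.\<close>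
lemma ncomp_eq_projection:
  fixes G :: "real^3 \<Rightarrow> real^3^3" and A :: "real^3^3"
  assumes f: "f differentiable (at p)"
    and G: "G p = transpose A ** A" and A: "invertible A"
    and N: "G p *v N = grad f p" and nz: "grad f p \<bullet> N \<noteq> 0"
  shows "ncomp G f p w = ((grad f p \<bullet> w) / (grad f p \<bullet> N)) *\<^sub>R N"
proof -
  let ?g = "grad f p" and ?n = "((grad f p \<bullet> w) / (grad f p \<bullet> N)) *\<^sub>R N"
  have T: "tspace f p = {z. ?g \<bullet> z = 0}"
    unfolding tspace_def using dderiv_eq_inner_grad[OF f] by simp
  have "transpose (G p) = G p" by (simp add: G matrix_transpose_mul)
  then have gip_N: "gip G p N t = ?g \<bullet> t" for t
    unfolding gip_def by (simp add: inner_matrix_vector_mult N inner_commute)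
  have n: "w - ?n \<in> tspace f p \<and> (\<forall>t\<in>tspace f p. gip G p ?n t = 0)"
    using nz gip_N by (simp add: T inner_diff_right gip_def)
  moreover have "n = ?n" if "w - n \<in> tspace f p \<and> (\<forall>t\<in>tspace f p. gip G p n t = 0)" for n
  proof (rule ccontr)
    let ?d = "n - ?n"
    assume "n \<noteq> ?n"
    have "?d = (w - ?n) - (w - n)" by simp
    then have d: "?d \<in> tspace f p" using n that unfolding T by (simp add: inner_diff_right)
    have "gip G p n ?d = 0" "gip G p ?n ?d = 0" using n that d by blast+
    then have "?d \<bullet> (G p *v ?d) = 0" unfolding gip_def by (simp add: inner_diff_left)
    moreover have "?d \<bullet> (G p *v ?d) > 0"
      unfolding G by (rule gram_matrix_pos[OF A]) (use \<open>n \<noteq> ?n\<close> in simp)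
    ultimately show False by simp
  qed
  ultimately show ?thesis unfolding ncomp_def by (rule the_equality)
qed

lemma has_derivative_frame_mat:
  assumes "(X0 has_derivative DX0) (at p)" "(X1 has_derivative DX1) (at p)"
    "(X2 has_derivative DX2) (at p)"
  shows "((\<lambda>y. frame_mat eps X0 X1 X2 y $ i $ j) has_derivative
           (\<lambda>h. frame_mat eps (\<lambda>_. DX0 h) (\<lambda>_. DX1 h) (\<lambda>_. DX2 h) p $ i $ j)) (at p)"
  unfolding frame_mat_def
  by (cases "j = 1"; cases "j = 2")
    (use has_derivative_mult_right[OF has_derivative_vec_nth[OF assms(1)]]
      has_derivative_vec_nth[OF assms(2)] has_derivative_vec_nth[OF assms(3)] in simp_all)

definition gmetric_deriv :: "real \<Rightarrow> (real^3 \<Rightarrow> real^3) \<Rightarrow> (real^3 \<Rightarrow> real^3) \<Rightarrow> (real^3 \<Rightarrow> real^3)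
    \<Rightarrow> real^3 \<Rightarrow> real^3 \<Rightarrow> real^3^3" where
  "gmetric_deriv eps X0 X1 X2 p h =
     transpose (matrix_inv_deriv (frame_mat eps X0 X1 X2) p h) ** matrix_inv (frame_mat eps X0 X1 X2 p)
     + transpose (matrix_inv (frame_mat eps X0 X1 X2 p)) ** matrix_inv_deriv (frame_mat eps X0 X1 X2) p h"

lemma has_derivative_gmetric:
  assumes U: "open U" "p \<in> U" and eps: "eps \<noteq> 0"
    and indep: "\<forall>x\<in>U. \<forall>a b. a *\<^sub>R X1 x + b *\<^sub>R X2 x = 0 \<longrightarrow> a = 0 \<and> b = 0"
    and transverse: "\<forall>x\<in>U. X0 x \<notin> span {X1 x, X2 x}"
    and X: "(X0 has_derivative DX0) (at p)" "(X1 has_derivative DX1) (at p)"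
      "(X2 has_derivative DX2) (at p)"
  shows "((\<lambda>y. gmetric eps X0 X1 X2 y $ j $ l) has_derivative
           (\<lambda>h. gmetric_deriv eps X0 X1 X2 p h $ j $ l)) (at p)"
    and "matrix_inv_deriv (frame_mat eps X0 X1 X2) p h
           = - (matrix_inv (frame_mat eps X0 X1 X2 p)
                ** frame_mat eps (\<lambda>_. DX0 h) (\<lambda>_. DX1 h) (\<lambda>_. DX2 h) p
                ** matrix_inv (frame_mat eps X0 X1 X2 p))"
proof -
  let ?F = "frame_mat eps X0 X1 X2"
  have inv: "\<forall>y\<in>U. invertible (?F y)"
    using frame_mat_invertible[OF eps] indep transverse by blast
  note DA = has_derivative_matrix_inv[OF U inv, of "\<lambda>h. frame_mat eps (\<lambda>_. DX0 h) (\<lambda>_. DX1 h) (\<lambda>_. DX2 h) p"]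
  show "matrix_inv_deriv ?F p h = - (matrix_inv (?F p)
      ** frame_mat eps (\<lambda>_. DX0 h) (\<lambda>_. DX1 h) (\<lambda>_. DX2 h) p ** matrix_inv (?F p))"
    by (rule DA(2)) (use has_derivative_frame_mat[OF X] in blast)
  have "((\<lambda>y. \<Sum>k\<in>UNIV. matrix_inv (?F y) $ k $ j * matrix_inv (?F y) $ k $ l) has_derivative
     (\<lambda>h. \<Sum>k\<in>UNIV. matrix_inv (?F p) $ k $ j * matrix_inv_deriv ?F p h $ k $ l
                   + matrix_inv_deriv ?F p h $ k $ j * matrix_inv (?F p) $ k $ l)) (at p)"
    using DA(1) has_derivative_frame_mat[OF X] by (intro has_derivative_sum has_derivative_mult) blast+
  then show "((\<lambda>y. gmetric eps X0 X1 X2 y $ j $ l) has_derivative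
      (\<lambda>h. gmetric_deriv eps X0 X1 X2 p h $ j $ l)) (at p)"
    by (simp add: gmetric_def gmetric_deriv_def matrix_matrix_mult_def transpose_def sum.distrib add.commute)
qed

text \<open>The Christoffel symbols of \<open>G\<close> contracted with \<open>g\<close>, expressed through \<open>N = G\<^sup>-\<^sup>1 g\<close> and the
  derivative \<open>DG\<close> of the metric (Koszul's formula in coordinates).\<close>
definition christoffel_form :: "(real^3 \<Rightarrow> real^3^3) \<Rightarrow> real^3 \<Rightarrow> real^3 \<Rightarrow> real^3 \<Rightarrow> real" where
  "christoffel_form DG N u v = (1/2) * (v \<bullet> (DG u *v N) + u \<bullet> (DG v *v N) - u \<bullet> (DG N *v v))"

lemma inner_christ_contraction:
  fixes G DG :: "real^3 \<Rightarrow> real^3^3" and g u v :: "real^3"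
  assumes DG_entries: "\<And>i j l. dderiv (\<lambda>y. G y $ j $ l) p (axis i 1) = DG (axis i 1) $ j $ l"
    and lin: "linear DG"
    and sym: "\<And>k l. matrix_inv (G p) $ k $ l = matrix_inv (G p) $ l $ k"
  shows "(\<Sum>k\<in>UNIV. g$k * (\<Sum>i\<in>UNIV. \<Sum>j\<in>UNIV. christ G p k i j * u$i * v$j))
    = christoffel_form DG (matrix_inv (G p) *v g) u v"
proof -
  let ?N = "matrix_inv (G p) *v g"
  have expand: "DG u = (\<Sum>i\<in>UNIV. u$i *\<^sub>R DG (axis i 1))"
    "DG v = (\<Sum>i\<in>UNIV. v$i *\<^sub>R DG (axis i 1))"
    "DG ?N = (\<Sum>i\<in>UNIV. ?N$i *\<^sub>R DG (axis i 1))"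
    by (rule linear_axis_expansion[OF lin])+
  show ?thesis
    unfolding christ_def christoffel_form_def DG_entries expand
    by (simp add: sum_3 inner_vec_def matrix_vector_mult_def algebra_simps sym)
qed

lemma bilinear_christoffel_form:
  assumes lin: "linear DG"
  shows "bilinear (christoffel_form DG N)"
proof -
  have DG: "DG (a *\<^sub>R u + b *\<^sub>R v) = a *\<^sub>R DG u + b *\<^sub>R DG v" for a b u v
    using lin by (simp add: linear_add linear_scale)
  have sv: "(c *\<^sub>R M) *v z = c *\<^sub>R (M *v z)" for c and M :: "real^3^3" and z
    by (simp add: scaleR_matrix_vector_assoc)
  have left: "christoffel_form DG N (a *\<^sub>R u + b *\<^sub>R v) w
      = a * christoffel_form DG N u w + b * christoffel_form DG N v w" for a b u v w
    unfolding christoffel_form_def DG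
    by (simp add: matrix_vector_mult_add_rdistrib sv inner_add_left inner_add_right algebra_simps)
  have right: "christoffel_form DG N w (a *\<^sub>R u + b *\<^sub>R v)
      = a * christoffel_form DG N w u + b * christoffel_form DG N w v" for a b u v w
    unfolding christoffel_form_def DG
    by (simp add: matrix_vector_mult_add_rdistrib matrix_vector_right_distrib matrix_vector_mult_scaleR
        sv inner_add_left inner_add_right algebra_simps)
  show ?thesis
    unfolding bilinear_def linear_iff
    using left[where a=1 and b=1] left[where b=0] right[where a=1 and b=1] right[where b=0] by simp
qed

lemma christoffel_form_commute:
  assumes "transpose (DG N) = DG N"
  shows "christoffel_form DG N u v = christoffel_form DG N v u"
proof -
  have "u \<bullet> (DG N *v v) = v \<bullet> (DG N *v u)"
    by (subst inner_matrix_vector_mult) (simp add: assms inner_commute)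
  then show ?thesis unfolding christoffel_form_def by simp
qed

definition frame_coords :: "(real^3 \<Rightarrow> real^3) \<Rightarrow> (real^3 \<Rightarrow> real^3) \<Rightarrow> (real^3 \<Rightarrow> real^3) \<Rightarrow> real^3
    \<Rightarrow> real^3^3" where
  "frame_coords X0 X1 X2 x = matrix_inv (frame_mat 1 X0 X1 X2 x)"

text \<open>The inner product of \<open>g\<^sup>\<epsilon>\<close> in the coordinates \<open>K\<close> with respect to \<open>(X\<^sub>0, X\<^sub>1, X\<^sub>2)\<close>.\<close>
definition frame_inner :: "real^3^3 \<Rightarrow> real \<Rightarrow> real^3 \<Rightarrow> real^3 \<Rightarrow> real" where
  "frame_inner K eps a b = (K *v a)$1 * (K *v b)$1 / eps^2 + (K *v a)$2 * (K *v b)$2 + (K *v a)$3 * (K *v b)$3"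

text \<open>\<open>(D\<^sub>hF) F\<^sup>-\<^sup>1 w\<close>, where \<open>F\<close> is the frame matrix: the frame vectors are differentiated in direction
  \<open>h\<close> and recombined with the coordinates of \<open>w\<close>.\<close>
definition frame_variation :: "real^3^3 \<Rightarrow> (real^3 \<Rightarrow> real^3) \<Rightarrow> (real^3 \<Rightarrow> real^3) \<Rightarrow> (real^3 \<Rightarrow> real^3)
    \<Rightarrow> real^3 \<Rightarrow> real^3 \<Rightarrow> real^3" where
  "frame_variation K DX0 DX1 DX2 h w = (K *v w)$1 *\<^sub>R DX0 h + (K *v w)$2 *\<^sub>R DX1 h + (K *v w)$3 *\<^sub>R DX2 h"

lemma bilinear_frame_inner: "bilinear (frame_inner K eps)"
  unfolding bilinear_def linear_iff frame_inner_def
  by (simp add: matrix_vector_right_distrib matrix_vector_mult_scaleR algebra_simps add_divide_distrib)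

lemma axis_nth_3:
  "axis (1::3) (1::real) $ 1 = 1" "axis (1::3) (1::real) $ 2 = 0" "axis (1::3) (1::real) $ 3 = 0"
  "axis (2::3) (1::real) $ 1 = 0" "axis (2::3) (1::real) $ 2 = 1" "axis (2::3) (1::real) $ 3 = 0"
  "axis (3::3) (1::real) $ 1 = 0" "axis (3::3) (1::real) $ 2 = 0" "axis (3::3) (1::real) $ 3 = 1"
  by (simp_all add: axis_def)

lemma inner_gmetric_deriv:
  fixes eps :: real and X0 X1 X2 :: "real^3 \<Rightarrow> real^3" and p :: "real^3"
  defines "A \<equiv> matrix_inv (frame_mat eps X0 X1 X2 p)"
  assumes DA: "matrix_inv_deriv (frame_mat eps X0 X1 X2) p h = - (A ** M ** A)"
  shows "w \<bullet> (gmetric_deriv eps X0 X1 X2 p h *v z)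
    = - ((A *v (M *v (A *v w))) \<bullet> (A *v z) + (A *v w) \<bullet> (A *v (M *v (A *v z))))"
proof -
  let ?D = "matrix_inv_deriv (frame_mat eps X0 X1 X2) p h"
  have neg: "(- B) *v x = - (B *v x)" for B :: "real^3^3" and x
    by (simp add: vec_eq_iff matrix_vector_mult_def sum_negf)
  have "w \<bullet> (gmetric_deriv eps X0 X1 X2 p h *v z)
      = w \<bullet> (transpose ?D *v (A *v z)) + w \<bullet> (transpose A *v (?D *v z))"
    unfolding gmetric_deriv_def A_def
    by (simp add: matrix_vector_mult_add_rdistrib inner_add_right matrix_vector_mul_assoc[symmetric])
  also have "w \<bullet> (transpose ?D *v (A *v z)) = (?D *v w) \<bullet> (A *v z)"
    by (subst inner_matrix_vector_mult) simp
  also have "w \<bullet> (transpose A *v (?D *v z)) = (A *v w) \<bullet> (?D *v z)"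
    by (subst inner_matrix_vector_mult) simp
  also have "?D *v w = - (A *v (M *v (A *v w)))"
    unfolding DA by (simp add: matrix_vector_mul_assoc neg matrix_mul_assoc)
  also have "?D *v z = - (A *v (M *v (A *v z)))"
    unfolding DA by (simp add: matrix_vector_mul_assoc neg matrix_mul_assoc)
  finally show ?thesis by (simp add: inner_minus_left inner_minus_right)
qed

lemma transpose_gmetric_deriv: "transpose (gmetric_deriv eps X0 X1 X2 p h) = gmetric_deriv eps X0 X1 X2 p h"
  unfolding gmetric_deriv_def by (simp add: transpose_add matrix_transpose_mul add.commute)

locale frame_at =
  fixes X0 X1 X2 :: "real^3 \<Rightarrow> real^3" and p :: "real^3"
  assumes frame_indep: "\<forall>a b. a *\<^sub>R X1 p + b *\<^sub>R X2 p = 0 \<longrightarrow> a = 0 \<and> b = 0"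
    and frame_transverse: "X0 p \<notin> span {X1 p, X2 p}"
begin

lemma invertible_frame_mat: "eps \<noteq> 0 \<Longrightarrow> invertible (frame_mat eps X0 X1 X2 p)"
  using frame_mat_invertible[of eps X1 p X2 X0] frame_indep frame_transverse by blast

lemma frame_coords_decomp:
  "w = (frame_coords X0 X1 X2 p *v w)$1 *\<^sub>R X0 p + (frame_coords X0 X1 X2 p *v w)$2 *\<^sub>R X1 p
     + (frame_coords X0 X1 X2 p *v w)$3 *\<^sub>R X2 p"
  using matrix_inv_mult_vec(1)[OF invertible_frame_mat, of 1 w]
  by (simp add: frame_coords_def frame_mat_mult_vec)

lemma frame_coords_frame:
  "frame_coords X0 X1 X2 p *v X0 p = axis 1 1"
  "frame_coords X0 X1 X2 p *v X1 p = axis 2 1"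
  "frame_coords X0 X1 X2 p *v X2 p = axis 3 1"
proof -
  let ?F = "frame_mat 1 X0 X1 X2 p"
  have "?F *v axis 1 1 = X0 p" "?F *v axis 2 1 = X1 p" "?F *v axis 3 1 = X2 p"
    by (simp_all add: frame_mat_mult_vec axis_nth_3)
  then show "frame_coords X0 X1 X2 p *v X0 p = axis 1 1" "frame_coords X0 X1 X2 p *v X1 p = axis 2 1"
    "frame_coords X0 X1 X2 p *v X2 p = axis 3 1"
    using matrix_inv_mult_vec(2)[OF invertible_frame_mat, of 1]
    unfolding frame_coords_def by (metis one_neq_zero)+
qed

lemma matrix_inv_frame_mat_mult_vec:
  assumes eps: "eps \<noteq> 0"
  shows "matrix_inv (frame_mat eps X0 X1 X2 p) *v w =
    (\<chi> i. if i = 1 then (frame_coords X0 X1 X2 p *v w)$1 / eps else (frame_coords X0 X1 X2 p *v w)$i)"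
proof -
  let ?K = "frame_coords X0 X1 X2 p"
  have "frame_mat eps X0 X1 X2 p *v (\<chi> i. if i = 1 then (?K *v w)$1 / eps else (?K *v w)$i) = w"
    using eps by (simp add: frame_mat_mult_vec frame_coords_decomp[symmetric])
  then show ?thesis
    using matrix_inv_mult_vec(2)[OF invertible_frame_mat[OF eps]] by metis
qed

lemma inner_matrix_inv_frame_mat:
  assumes "eps \<noteq> 0"
  shows "(matrix_inv (frame_mat eps X0 X1 X2 p) *v u) \<bullet> (matrix_inv (frame_mat eps X0 X1 X2 p) *v v)
    = frame_inner (frame_coords X0 X1 X2 p) eps u v"
  using assms
  by (simp add: matrix_inv_frame_mat_mult_vec inner_vec_def sum_3 frame_inner_def power2_eq_square)

lemma gip_gmetric:
  assumes "eps \<noteq> 0"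
  shows "gip (gmetric eps X0 X1 X2) p u v = frame_inner (frame_coords X0 X1 X2 p) eps u v"
proof -
  let ?A = "matrix_inv (frame_mat eps X0 X1 X2 p)"
  have "gip (gmetric eps X0 X1 X2) p u v = u \<bullet> (transpose ?A *v (?A *v v))"
    unfolding gip_def gmetric_def by (simp only: matrix_vector_mul_assoc)
  also have "\<dots> = (?A *v u) \<bullet> (?A *v v)" by (subst inner_matrix_vector_mult) simp
  finally show ?thesis using inner_matrix_inv_frame_mat[OF assms] by simp
qed

text \<open>With \<open>F\<close> the frame matrix, \<open>F\<^sup>T g = \<epsilon> (g \<bullet> X\<^sub>0) e\<^sub>1\<close> and \<open>F\<^sup>-\<^sup>1 X\<^sub>0 = e\<^sub>1 / \<epsilon>\<close>.\<close>
lemma gmetric_mult_normal: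
  assumes eps: "eps \<noteq> 0" and g: "g \<bullet> X1 p = 0" "g \<bullet> X2 p = 0"
  shows "gmetric eps X0 X1 X2 p *v ((eps^2 * (g \<bullet> X0 p)) *\<^sub>R X0 p) = g"
proof -
  let ?F = "frame_mat eps X0 X1 X2 p"
  let ?A = "matrix_inv ?F"
  have inv: "invertible ?F" by (rule invertible_frame_mat[OF eps])
  have "transpose ?F *v g = (eps * (g \<bullet> X0 p)) *\<^sub>R axis 1 1"
    using g by (simp add: vec_eq_iff forall_3 frame_mat_def matrix_vector_mult_def transpose_def
        inner_vec_def sum_3 axis_nth_3 algebra_simps del: transpose_matrix_vector)
  moreover have "transpose ?A *v (transpose ?F *v g) = g"
  proof -
    have "transpose ?A ** transpose ?F = mat 1"
      using matrix_inv_mult(1)[OF inv] by (metis matrix_transpose_mul transpose_mat)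
    then show ?thesis by (simp only: matrix_vector_mul_assoc matrix_vector_mul_lid)
  qed
  moreover have "?A *v X0 p = (1 / eps) *\<^sub>R axis 1 1"
    using eps by (simp add: matrix_inv_frame_mat_mult_vec frame_coords_frame vec_eq_iff forall_3 axis_nth_3)
  ultimately show ?thesis
    using eps
    by (simp add: gmetric_def matrix_vector_mul_assoc[symmetric] matrix_vector_mult_scaleR power2_eq_square)
qed

lemma inner_gmetric_deriv_frame:
  assumes eps: "eps \<noteq> 0"
    and DA: "matrix_inv_deriv (frame_mat eps X0 X1 X2) p h
      = - (matrix_inv (frame_mat eps X0 X1 X2 p) ** frame_mat eps (\<lambda>_. DX0 h) (\<lambda>_. DX1 h) (\<lambda>_. DX2 h) p
           ** matrix_inv (frame_mat eps X0 X1 X2 p))"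
  shows "w \<bullet> (gmetric_deriv eps X0 X1 X2 p h *v z)
    = - (frame_inner (frame_coords X0 X1 X2 p) eps (frame_variation (frame_coords X0 X1 X2 p) DX0 DX1 DX2 h w) z
       + frame_inner (frame_coords X0 X1 X2 p) eps w (frame_variation (frame_coords X0 X1 X2 p) DX0 DX1 DX2 h z))"
proof -
  have "frame_mat eps (\<lambda>_. DX0 h) (\<lambda>_. DX1 h) (\<lambda>_. DX2 h) p *v (matrix_inv (frame_mat eps X0 X1 X2 p) *v x)
      = frame_variation (frame_coords X0 X1 X2 p) DX0 DX1 DX2 h x" for x
    using eps by (simp add: frame_mat_mult_vec matrix_inv_frame_mat_mult_vec frame_variation_def)
  then show ?thesis
    using inner_gmetric_deriv[OF DA, of w z] by (simp add: inner_matrix_inv_frame_mat[OF eps])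
qed

lemma christoffel_form_frame:
  fixes K defines "K \<equiv> frame_coords X0 X1 X2 p"
  assumes eps: "eps \<noteq> 0"
    and DA: "\<And>h. matrix_inv_deriv (frame_mat eps X0 X1 X2) p h
      = - (matrix_inv (frame_mat eps X0 X1 X2 p) ** frame_mat eps (\<lambda>_. DX0 h) (\<lambda>_. DX1 h) (\<lambda>_. DX2 h) p
           ** matrix_inv (frame_mat eps X0 X1 X2 p))"
    and lin: "linear DX0" "linear DX1" "linear DX2"
    and N: "N = (eps^2 * a0) *\<^sub>R X0 p"
  shows "christoffel_form (gmetric_deriv eps X0 X1 X2 p) N (X1 p) (X1 p) =
           - a0 * (K *v DX1 (X1 p))$1 + eps^2 * (a0 * (- (K *v DX0 (X1 p))$2 + (K *v DX1 (X0 p))$2))"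
    "christoffel_form (gmetric_deriv eps X0 X1 X2 p) N (X2 p) (X2 p) =
           - a0 * (K *v DX2 (X2 p))$1 + eps^2 * (a0 * (- (K *v DX0 (X2 p))$3 + (K *v DX2 (X0 p))$3))"
    "christoffel_form (gmetric_deriv eps X0 X1 X2 p) N (X1 p) (X2 p) =
           - (a0/2) * ((K *v DX2 (X1 p))$1 + (K *v DX1 (X2 p))$1)
           + eps^2 * ((a0/2) * (- (K *v DX0 (X1 p))$3 - (K *v DX0 (X2 p))$2
                                + (K *v DX1 (X0 p))$3 + (K *v DX2 (X0 p))$2))"
proof -
  let ?L = "frame_variation K DX0 DX1 DX2" and ?ip = "frame_inner K eps"
  have K: "K *v X0 p = axis 1 1" "K *v X1 p = axis 2 1" "K *v X2 p = axis 3 1"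
    unfolding K_def by (rule frame_coords_frame)+
  have DG: "w \<bullet> (gmetric_deriv eps X0 X1 X2 p h *v z) = - (?ip (?L h w) z + ?ip w (?L h z))" for w h z
    unfolding K_def by (rule inner_gmetric_deriv_frame[OF eps DA])
  have L_frame: "?L h (X0 p) = DX0 h" "?L h (X1 p) = DX1 h" "?L h (X2 p) = DX2 h" for h
    by (simp_all add: frame_variation_def K axis_nth_3)
  have L_scale: "?L h (c *\<^sub>R w) = c *\<^sub>R ?L h w" "?L (c *\<^sub>R h) w = c *\<^sub>R ?L h w" for h c w
    using lin by (simp_all add: frame_variation_def matrix_vector_mult_scaleR linear_scale algebra_simps)
  have ip_frame: "?ip a (X1 p) = (K *v a)$2" "?ip a (X2 p) = (K *v a)$3"
    "?ip (X1 p) a = (K *v a)$2" "?ip (X2 p) a = (K *v a)$3" for a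
    by (simp_all add: frame_inner_def K axis_nth_3)
  have ip_N: "?ip a N = a0 * (K *v a)$1" "?ip N a = a0 * (K *v a)$1" for a
    using eps by (simp_all add: frame_inner_def N matrix_vector_mult_scaleR K axis_nth_3 power2_eq_square)
  have ip_scale: "?ip (c *\<^sub>R a) b = c * ?ip a b" "?ip a (c *\<^sub>R b) = c * ?ip a b" for a b c
    by (simp_all add: frame_inner_def matrix_vector_mult_scaleR algebra_simps)
  have L_N: "?L N w = (eps^2 * a0) *\<^sub>R ?L (X0 p) w" "?L h N = (eps^2 * a0) *\<^sub>R DX0 h" for h w
    by (simp_all only: N L_scale L_frame)
  have DX_N: "DX0 N = (eps^2 * a0) *\<^sub>R DX0 (X0 p)" "DX1 N = (eps^2 * a0) *\<^sub>R DX1 (X0 p)"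
    "DX2 N = (eps^2 * a0) *\<^sub>R DX2 (X0 p)"
    using lin by (simp_all add: N linear_scale)
  show "christoffel_form (gmetric_deriv eps X0 X1 X2 p) N (X1 p) (X1 p) =
           - a0 * (K *v DX1 (X1 p))$1 + eps^2 * (a0 * (- (K *v DX0 (X1 p))$2 + (K *v DX1 (X0 p))$2))"
    "christoffel_form (gmetric_deriv eps X0 X1 X2 p) N (X2 p) (X2 p) =
           - a0 * (K *v DX2 (X2 p))$1 + eps^2 * (a0 * (- (K *v DX0 (X2 p))$3 + (K *v DX2 (X0 p))$3))"
    "christoffel_form (gmetric_deriv eps X0 X1 X2 p) N (X1 p) (X2 p) =
           - (a0/2) * ((K *v DX2 (X1 p))$1 + (K *v DX1 (X2 p))$1)
           + eps^2 * ((a0/2) * (- (K *v DX0 (X1 p))$3 - (K *v DX0 (X2 p))$2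
                                + (K *v DX1 (X0 p))$3 + (K *v DX2 (X0 p))$2))"
    unfolding christoffel_form_def DG L_N L_frame ip_scale ip_frame ip_N
    by (simp_all add: DX_N matrix_vector_mult_scaleR algebra_simps)
qed

end

section \<open>The characteristic point\<close>

locale characteristic_point =
  fixes U :: "(real^3) set" and X0 X1 X2 :: "real^3 \<Rightarrow> real^3" and f :: "real^3 \<Rightarrow> real"
    and p :: "real^3"
  assumes open_U: "open U" and p_in_U: "p \<in> U"
    and X_differentiable: "X0 differentiable (at p)" "X1 differentiable (at p)" "X2 differentiable (at p)"
    and indep: "\<forall>x\<in>U. \<forall>a b. a *\<^sub>R X1 x + b *\<^sub>R X2 x = 0 \<longrightarrow> a = 0 \<and> b = 0"
    and transverse: "\<forall>x\<in>U. X0 x \<notin> span {X1 x, X2 x}"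
    and f_differentiable: "\<forall>x\<in>U. f differentiable (at x)"
    and f_partials: "\<forall>k. (\<lambda>x. dderiv f x (axis k 1)) differentiable (at p)"
    and f_p: "f p = 0"
    and characteristic: "tspace f p = span {X1 p, X2 p}"
begin

abbreviation "K \<equiv> frame_coords X0 X1 X2 p"
abbreviation "X0f \<equiv> vf_app X0 f p"
abbreviation "DX0 \<equiv> dderiv X0 p"
abbreviation "DX1 \<equiv> dderiv X1 p"
abbreviation "DX2 \<equiv> dderiv X2 p"

sublocale frame_at X0 X1 X2 p
  using indep transverse p_in_U by unfold_locales auto

lemma has_derivative_X: "(X0 has_derivative DX0) (at p)" "(X1 has_derivative DX1) (at p)"
  "(X2 has_derivative DX2) (at p)"
  using has_derivative_dderiv X_differentiable by blast+

lemma f_differentiable_p: "f differentiable (at p)"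
  using f_differentiable p_in_U by blast

lemma dderiv_f: "dderiv f p v = grad f p \<bullet> v"
  by (rule dderiv_eq_inner_grad[OF f_differentiable_p])

lemma grad_X: "grad f p \<bullet> X0 p = X0f" "grad f p \<bullet> X1 p = 0" "grad f p \<bullet> X2 p = 0"
proof -
  have "X1 p \<in> tspace f p" "X2 p \<in> tspace f p" unfolding characteristic by (auto intro: span_base)
  then show "grad f p \<bullet> X1 p = 0" "grad f p \<bullet> X2 p = 0" by (simp_all add: tspace_def dderiv_f)
  show "grad f p \<bullet> X0 p = X0f" by (simp add: vf_app_def dderiv_f)
qed

lemma X0f_nonzero: "X0f \<noteq> 0"
proof
  assume "X0f = 0"
  then have "X0 p \<in> tspace f p" by (simp add: tspace_def vf_app_def)
  then show False using frame_transverse characteristic by simp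
qed

lemma grad_inner: "grad f p \<bullet> w = X0f * (K *v w)$1"
  by (subst frame_coords_decomp[of w]) (simp add: inner_add_right grad_X)

lemma vf_app_vf_app:
  assumes "(Xj has_derivative DXj) (at p)"
  shows "vf_app Xi (vf_app Xj f) p = X0f * (K *v DXj (Xi p))$1 + hessian_form f p (Xi p) (Xj p)"
proof -
  have "vf_app Xi (vf_app Xj f) p = dderiv (\<lambda>x. dderiv f x (Xj x)) p (Xi p)"
    by (simp add: vf_app_def[abs_def])
  also have "\<dots> = dderiv f p (DXj (Xi p)) + hessian_form f p (Xi p) (Xj p)"
    using dderiv_eqI[OF has_derivative_dderiv_along[OF open_U p_in_U f_differentiable f_partials assms]]
    by simp
  finally show ?thesis by (simp add: dderiv_f grad_inner)
qed

lemma c012_eq: "c012 X0 X1 X2 p = (K *v (DX1 (X2 p) - DX2 (X1 p)))$1"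
proof -
  define l where "l = DX1 (X2 p) - DX2 (X1 p)"
  have lie: "lie X2 X1 p = l" by (simp add: lie_def l_def)
  have "c012 X0 X1 X2 p = (K *v l)$1"
    unfolding c012_def
  proof (rule the_equality)
    show "\<exists>c1 c2. lie X2 X1 p = c1 *\<^sub>R X1 p + c2 *\<^sub>R X2 p + (K *v l)$1 *\<^sub>R X0 p"
      unfolding lie by (rule exI, rule exI, subst frame_coords_decomp[of l]) (simp add: algebra_simps)
    fix c0 assume "\<exists>c1 c2. lie X2 X1 p = c1 *\<^sub>R X1 p + c2 *\<^sub>R X2 p + c0 *\<^sub>R X0 p"
    then obtain c1 c2 where "l = c1 *\<^sub>R X1 p + c2 *\<^sub>R X2 p + c0 *\<^sub>R X0 p" unfolding lie by blast
    then have "K *v l = c1 *\<^sub>R axis 2 1 + c2 *\<^sub>R axis 3 1 + c0 *\<^sub>R axis 1 1"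
      by (simp add: matrix_vector_right_distrib matrix_vector_mult_scaleR frame_coords_frame)
    then show "c0 = (K *v l)$1" by (simp add: axis_nth_3)
  qed
  then show ?thesis by (simp add: l_def)
qed

text \<open>At a characteristic point \<open>X\<^sub>1f = X\<^sub>2f = 0\<close>, so \<open>[X\<^sub>2,X\<^sub>1]f = c\<^sup>0\<^sub>1\<^sub>2 X\<^sub>0f\<close>.\<close>
lemma commutator_at_characteristic:
  "vf_app X2 (vf_app X1 f) p - vf_app X1 (vf_app X2 f) p = X0f * c012 X0 X1 X2 p"
  using vf_app_vf_app[OF has_derivative_X(2), of X2] vf_app_vf_app[OF has_derivative_X(3), of X1]
    hessian_form_commute[OF open_U p_in_U f_differentiable f_partials, of "X1 p" "X2 p"]
  by (simp add: c012_eq matrix_vector_mult_diff_distrib algebra_simps)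

definition sym_hess :: "(real^3 \<Rightarrow> real^3) \<Rightarrow> (real^3 \<Rightarrow> real^3) \<Rightarrow> real" where
  "sym_hess Xi Xj = (vf_app Xi (vf_app Xj f) p + vf_app Xj (vf_app Xi f) p) / 2"

lemma leading_coefficient:
  "detHessH f X1 X2 p / X0f^2 - (c012 X0 X1 X2 p)^2 / 4
     = (sym_hess X1 X1 * sym_hess X2 X2 - (sym_hess X1 X2)^2) / X0f^2"
  using commutator_at_characteristic X0f_nonzero
  by (simp add: detHessH_def sym_hess_def field_simps power2_eq_square)

text \<open>For tangent fields \<open>Y, Z\<close> with \<open>Y(p) = u\<close>, \<open>Z(p) = v\<close>, this is \<open>\<langle>grad f, \<nabla>\<^sup>\<epsilon>\<^sub>YZ\<rangle>(p)\<close>; the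
  normal vector \<open>\<epsilon>\<^sup>2 (X\<^sub>0f) X\<^sub>0\<close> is the \<open>g\<^sup>\<epsilon>\<close>-dual of \<open>grad f\<close>.\<close>
definition second_form :: "real \<Rightarrow> real^3 \<Rightarrow> real^3 \<Rightarrow> real" where
  "second_form eps u v = - hessian_form f p u v
     + christoffel_form (gmetric_deriv eps X0 X1 X2 p) ((eps^2 * X0f) *\<^sub>R X0 p) u v"

context
  fixes eps :: real
  assumes eps: "eps > 0"
begin

lemma has_derivative_gmetric_p:
  "((\<lambda>y. gmetric eps X0 X1 X2 y $ j $ l) has_derivative (\<lambda>h. gmetric_deriv eps X0 X1 X2 p h $ j $ l)) (at p)"
  "matrix_inv_deriv (frame_mat eps X0 X1 X2) p h
     = - (matrix_inv (frame_mat eps X0 X1 X2 p) ** frame_mat eps (\<lambda>_. DX0 h) (\<lambda>_. DX1 h) (\<lambda>_. DX2 h) p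
          ** matrix_inv (frame_mat eps X0 X1 X2 p))"
  using eps by (intro has_derivative_gmetric[OF open_U p_in_U _ indep transverse has_derivative_X]; simp)+

lemma linear_gmetric_deriv: "linear (gmetric_deriv eps X0 X1 X2 p)"
proof -
  have lin: "linear (\<lambda>h. gmetric_deriv eps X0 X1 X2 p h $ j $ l)" for j l
    using has_derivative_gmetric_p(1) has_derivative_linear by blast
  show ?thesis
    by (intro linearI) (simp_all add: vec_eq_iff linear_add[OF lin] linear_scale[OF lin])
qed

lemma gmetric_gram: "gmetric eps X0 X1 X2 p = transpose (matrix_inv (frame_mat eps X0 X1 X2 p))
    ** matrix_inv (frame_mat eps X0 X1 X2 p)"
  by (simp add: gmetric_def)

lemma invertible_matrix_inv_frame_mat: "invertible (matrix_inv (frame_mat eps X0 X1 X2 p))"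
  unfolding invertible_def
  using matrix_inv_mult[OF invertible_frame_mat] eps by (intro exI[of _ "frame_mat eps X0 X1 X2 p"]) simp

lemma matrix_inv_gmetric_grad: "matrix_inv (gmetric eps X0 X1 X2 p) *v grad f p = (eps^2 * X0f) *\<^sub>R X0 p"
proof -
  have "gmetric eps X0 X1 X2 p *v ((eps^2 * X0f) *\<^sub>R X0 p) = grad f p"
    using gmetric_mult_normal[of eps "grad f p"] eps by (simp add: grad_X)
  moreover have "invertible (gmetric eps X0 X1 X2 p)"
    unfolding gmetric_gram by (rule gram_matrix_inv(2)[OF invertible_matrix_inv_frame_mat])
  ultimately show ?thesis by (metis matrix_inv_mult_vec(2))
qed

lemma matrix_inv_gmetric_symmetric:
  "matrix_inv (gmetric eps X0 X1 X2 p) $ k $ l = matrix_inv (gmetric eps X0 X1 X2 p) $ l $ k"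
proof -
  have "matrix_inv (matrix_inv (frame_mat eps X0 X1 X2 p)) = frame_mat eps X0 X1 X2 p"
    using matrix_inv_mult(2)[OF invertible_frame_mat] eps by (intro matrix_inv_unique) auto
  then show ?thesis
    unfolding gmetric_gram gram_matrix_inv(1)[OF invertible_matrix_inv_frame_mat]
    by (simp add: matrix_matrix_mult_def transpose_def mult.commute)
qed

lemma grad_LC_conn:
  "grad f p \<bullet> LC_conn (gmetric eps X0 X1 X2) Y Z p
     = dderiv f p (dderiv Z p (Y p))
       + christoffel_form (gmetric_deriv eps X0 X1 X2 p) ((eps^2 * X0f) *\<^sub>R X0 p) (Y p) (Z p)"
proof -
  have "dderiv (\<lambda>y. gmetric eps X0 X1 X2 y $ j $ l) p (axis i 1)
      = gmetric_deriv eps X0 X1 X2 p (axis i 1) $ j $ l" for i j l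
    using dderiv_eqI[OF has_derivative_gmetric_p(1)] by simp
  from inner_christ_contraction[OF this linear_gmetric_deriv matrix_inv_gmetric_symmetric]
  show ?thesis
    unfolding LC_conn_def dderiv_f
    by (simp add: inner_add_right inner_vec_def distrib_left sum.distrib matrix_inv_gmetric_grad)
qed

lemma sff_gmetric:
  "sff (gmetric eps X0 X1 X2) f Y Z p = ((grad f p \<bullet> LC_conn (gmetric eps X0 X1 X2) Y Z p) / X0f) *\<^sub>R X0 p"
proof -
  have N: "gmetric eps X0 X1 X2 p *v ((eps^2 * X0f) *\<^sub>R X0 p) = grad f p"
    using gmetric_mult_normal[of eps "grad f p"] eps by (simp add: grad_X)
  have "grad f p \<bullet> ((eps^2 * X0f) *\<^sub>R X0 p) = eps^2 * X0f^2"
    by (simp add: grad_X power2_eq_square)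
  with ncomp_eq_projection[where G = "gmetric eps X0 X1 X2",
      OF f_differentiable_p gmetric_gram invertible_matrix_inv_frame_mat N]
  show ?thesis
    using eps X0f_nonzero by (simp add: sff_def power2_eq_square)
qed

lemma gip_gmetric_X0: "gip (gmetric eps X0 X1 X2) p (a *\<^sub>R X0 p) (b *\<^sub>R X0 p) = a * b / eps^2"
  using eps by (simp add: gip_gmetric frame_inner_def matrix_vector_mult_scaleR frame_coords_frame axis_nth_3)

lemma bilinear_second_form: "bilinear (second_form eps)"
  using bilinear_hessian_form[OF f_partials] bilinear_christoffel_form[OF linear_gmetric_deriv]
  unfolding bilinear_def linear_iff second_form_def by (simp add: algebra_simps)

lemma second_form_commute: "second_form eps (X2 p) (X1 p) = second_form eps (X1 p) (X2 p)"
  using hessian_form_commute[OF open_U p_in_U f_differentiable f_partials]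
    christoffel_form_commute[OF transpose_gmetric_deriv]
  by (simp add: second_form_def)

end

lemma second_form_frame:
  "\<exists>R11 R12 R22. \<forall>eps>0.
     second_form eps (X1 p) (X1 p) = - sym_hess X1 X1 + eps^2 * R11
     \<and> second_form eps (X1 p) (X2 p) = - sym_hess X1 X2 + eps^2 * R12
     \<and> second_form eps (X2 p) (X2 p) = - sym_hess X2 X2 + eps^2 * R22"
proof (intro exI allI impI)
  fix eps :: real assume "eps > 0"
  then have "eps \<noteq> 0" by simp
  note \<Gamma> = christoffel_form_frame[OF this has_derivative_gmetric_p(2)[OF \<open>eps > 0\<close>]
      linear_dderiv[OF X_differentiable(1)] linear_dderiv[OF X_differentiable(2)]
      linear_dderiv[OF X_differentiable(3)] refl]
  have H: "hessian_form f p (X2 p) (X1 p) = hessian_form f p (X1 p) (X2 p)"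
    by (rule hessian_form_commute[OF open_U p_in_U f_differentiable f_partials])
  show "second_form eps (X1 p) (X1 p) = - sym_hess X1 X1
      + eps^2 * (X0f * (- (K *v DX0 (X1 p))$2 + (K *v DX1 (X0 p))$2))
    \<and> second_form eps (X1 p) (X2 p) = - sym_hess X1 X2
      + eps^2 * ((X0f/2) * (- (K *v DX0 (X1 p))$3 - (K *v DX0 (X2 p))$2
                             + (K *v DX1 (X0 p))$3 + (K *v DX2 (X0 p))$2))
    \<and> second_form eps (X2 p) (X2 p) = - sym_hess X2 X2
      + eps^2 * (X0f * (- (K *v DX0 (X2 p))$3 + (K *v DX2 (X0 p))$3))"
    unfolding second_form_def \<Gamma> sym_hess_def vf_app_vf_app[OF has_derivative_X(2)]
      vf_app_vf_app[OF has_derivative_X(3)] H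
    by (simp add: algebra_simps)
qed

lemma tangent_field_derivative:
  assumes V: "open V" "p \<in> V" "V \<subseteq> U"
    and Z: "(Z has_derivative DZ) (at p)"
    and Z_tangent: "\<forall>x\<in>V. f x = 0 \<longrightarrow> Z x \<in> tspace f x"
    and v: "v \<in> tspace f p"
  shows "dderiv f p (DZ v) + hessian_form f p v (Z p) = 0"
proof (rule has_derivative_vanishing_on_level_set[OF V(1,2) _ has_derivative_dderiv[OF f_differentiable_p] f_p _ _
      has_derivative_dderiv_along[OF open_U p_in_U f_differentiable f_partials Z]])
  show "continuous_on V f"
    using f_differentiable V(3)
    by (meson continuous_at_imp_continuous_on differentiable_imp_continuous_within subsetD)
  show "dderiv f p (X0 p) \<noteq> 0" using X0f_nonzero by (simp add: vf_app_def)
  show "dderiv f p v = 0" using v by (simp add: tspace_def)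
  show "\<forall>x\<in>V. f x = 0 \<longrightarrow> dderiv f x (Z x) = 0" using Z_tangent by (simp add: tspace_def)
qed

end

locale characteristic_point_tangent_frame = characteristic_point +
  fixes V :: "(real^3) set" and Y1 Y2 :: "real^3 \<Rightarrow> real^3"
  assumes open_V: "open V" and p_in_V: "p \<in> V" and V_subset: "V \<subseteq> U"
    and Y_differentiable: "Y1 differentiable (at p)" "Y2 differentiable (at p)"
    and Y_tangent: "\<forall>x\<in>V. f x = 0 \<longrightarrow> Y1 x \<in> tspace f x \<and> Y2 x \<in> tspace f x"
    and Y_indep: "\<forall>a b. a *\<^sub>R Y1 p + b *\<^sub>R Y2 p = 0 \<longrightarrow> a = 0 \<and> b = 0"
begin

lemma grad_LC_conn_tangent:
  assumes eps: "eps > 0" and YZ: "Y \<in> {Y1, Y2}" "Z \<in> {Y1, Y2}"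
  shows "grad f p \<bullet> LC_conn (gmetric eps X0 X1 X2) Y Z p = second_form eps (Y p) (Z p)"
proof -
  have "Y p \<in> tspace f p" "\<forall>x\<in>V. f x = 0 \<longrightarrow> Z x \<in> tspace f x" "Z differentiable (at p)"
    using YZ Y_tangent Y_differentiable f_p p_in_V by auto
  then have "dderiv f p (dderiv Z p (Y p)) + hessian_form f p (Y p) (Z p) = 0"
    using tangent_field_derivative[OF open_V p_in_V V_subset has_derivative_dderiv] by blast
  then show ?thesis
    using grad_LC_conn[OF eps] by (simp add: second_form_def eq_neg_iff_add_eq_0)
qed

lemma Y_in_horizontal_frame:
  obtains m11 m12 m21 m22 where "Y1 p = m11 *\<^sub>R X1 p + m12 *\<^sub>R X2 p"
    "Y2 p = m21 *\<^sub>R X1 p + m22 *\<^sub>R X2 p" "m11 * m22 - m12 * m21 \<noteq> 0"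
proof -
  have "Y1 p \<in> span {X1 p, X2 p}" "Y2 p \<in> span {X1 p, X2 p}"
    using Y_tangent p_in_V f_p characteristic by auto
  then obtain m11 m12 m21 m22 where Y1: "Y1 p = m11 *\<^sub>R X1 p + m12 *\<^sub>R X2 p"
    and Y2: "Y2 p = m21 *\<^sub>R X1 p + m22 *\<^sub>R X2 p"
    by (metis span_pair_cases)
  moreover have "m11 * m22 - m12 * m21 \<noteq> 0"
  proof
    assume det: "m11 * m22 - m12 * m21 = 0"
    have "m22 *\<^sub>R Y1 p + (- m12) *\<^sub>R Y2 p = (m11 * m22 - m12 * m21) *\<^sub>R X1 p"
      "m21 *\<^sub>R Y1 p + (- m11) *\<^sub>R Y2 p = (- (m11 * m22 - m12 * m21)) *\<^sub>R X2 p"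
      unfolding Y1 Y2 by (simp_all add: algebra_simps)
    then have "m22 *\<^sub>R Y1 p + (- m12) *\<^sub>R Y2 p = 0" "m21 *\<^sub>R Y1 p + (- m11) *\<^sub>R Y2 p = 0"
      unfolding det by simp_all
    then have "m22 = 0" "m12 = 0" "m21 = 0" "m11 = 0"
      using Y_indep by (metis neg_equal_0_iff_equal)+
    then have "1 *\<^sub>R Y1 p + 0 *\<^sub>R Y2 p = 0" using Y1 by simp
    then show False using Y_indep[rule_format, of 1 0] by simp
  qed
  ultimately show ?thesis using that by blast
qed

text \<open>The normal components of \<open>\<nabla>\<^sup>\<epsilon>\<^sub>YZ\<close> are all multiples of \<open>X\<^sub>0\<close>, of \<open>g\<^sup>\<epsilon>\<close>-length \<open>1/\<epsilon>\<close>; the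
  changes of basis from \<open>(Y\<^sub>1, Y\<^sub>2)\<close> to the orthonormal \<open>(X\<^sub>1, X\<^sub>2)\<close> cancel between numerator and
  denominator.\<close>
lemma detII_gmetric:
  assumes eps: "eps > 0"
  shows "detII (gmetric eps X0 X1 X2) f Y1 Y2 p
    = (second_form eps (X1 p) (X1 p) * second_form eps (X2 p) (X2 p) - (second_form eps (X1 p) (X2 p))^2)
      / (eps^2 * X0f^2)"
proof -
  let ?G = "gmetric eps X0 X1 X2" and ?S = "second_form eps" and ?I = "frame_inner K eps"
  obtain m11 m12 m21 m22 where Y: "Y1 p = m11 *\<^sub>R X1 p + m12 *\<^sub>R X2 p"
    "Y2 p = m21 *\<^sub>R X1 p + m22 *\<^sub>R X2 p" and det: "m11 * m22 - m12 * m21 \<noteq> 0"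
    by (rule Y_in_horizontal_frame)
  have "gip ?G p (sff ?G f Y1 Y1 p) (sff ?G f Y2 Y2 p) - gip ?G p (sff ?G f Y1 Y2 p) (sff ?G f Y1 Y2 p)
      = (?S (Y1 p) (Y1 p) * ?S (Y2 p) (Y2 p) - (?S (Y1 p) (Y2 p))^2) / (X0f^2 * eps^2)"
    unfolding sff_gmetric[OF eps] gip_gmetric_X0[OF eps]
    by (simp add: grad_LC_conn_tangent[OF eps] power2_eq_square diff_divide_distrib)
  also have "?S (Y1 p) (Y1 p) * ?S (Y2 p) (Y2 p) - (?S (Y1 p) (Y2 p))^2
      = (m11 * m22 - m12 * m21)^2 * (?S (X1 p) (X1 p) * ?S (X2 p) (X2 p) - (?S (X1 p) (X2 p))^2)"
    unfolding Y by (rule bilinear_det_change_of_basis[OF bilinear_second_form[OF eps] second_form_commute[OF eps]])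
  finally have num: "gip ?G p (sff ?G f Y1 Y1 p) (sff ?G f Y2 Y2 p) - gip ?G p (sff ?G f Y1 Y2 p) (sff ?G f Y1 Y2 p)
      = (m11 * m22 - m12 * m21)^2 * (?S (X1 p) (X1 p) * ?S (X2 p) (X2 p) - (?S (X1 p) (X2 p))^2)
        / (X0f^2 * eps^2)" .
  have "?I (X1 p) (X1 p) = 1" "?I (X2 p) (X2 p) = 1" "?I (X1 p) (X2 p) = 0" "?I (X2 p) (X1 p) = 0"
    by (simp_all add: frame_inner_def frame_coords_frame axis_nth_3)
  then have den: "gip ?G p (Y1 p) (Y1 p) * gip ?G p (Y2 p) (Y2 p) - (gip ?G p (Y1 p) (Y2 p))^2
      = (m11 * m22 - m12 * m21)^2"
    unfolding gip_gmetric[OF less_imp_neq[OF eps, symmetric]] Y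
    using bilinear_det_change_of_basis[OF bilinear_frame_inner, where x = "X1 p" and y = "X2 p"] by simp
  show ?thesis
    unfolding detII_def num den using det X0f_nonzero eps by (simp add: field_simps)
qed

end

lemma bigo_at_right_0_const_plus_square:
  fixes F :: "real \<Rightarrow> real"
  assumes "\<forall>eps>0. F eps = C1 + eps^2 * C2"
  shows "F \<in> O[at_right 0](\<lambda>_. 1)"
proof (rule bigoI[where c = "\<bar>C1\<bar> + \<bar>C2\<bar>"])
  show "\<forall>\<^sub>F x in at_right 0. norm (F x) \<le> (\<bar>C1\<bar> + \<bar>C2\<bar>) * norm (1::real)"
  proof (rule eventually_at_rightI[of 0 1])
    fix x :: real assume x: "x \<in> {0<..<1}"
    then have "x^2 \<le> 1" by (simp add: power_le_one)
    have "\<bar>F x\<bar> = \<bar>C1 + x^2 * C2\<bar>" using assms x by auto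
    also have "\<dots> \<le> \<bar>C1\<bar> + x^2 * \<bar>C2\<bar>" by (simp add: abs_mult abs_triangle_ineq[THEN order_trans])
    also have "\<dots> \<le> \<bar>C1\<bar> + \<bar>C2\<bar>" using \<open>x^2 \<le> 1\<close> by (simp add: mult_left_le_one_le)
    finally show "norm (F x) \<le> (\<bar>C1\<bar> + \<bar>C2\<bar>) * norm (1::real)" by simp
  qed simp
qed

theorem lemma3p1:
  fixes U :: "(real^3) set" and X0 X1 X2 :: "real^3 \<Rightarrow> real^3"
    and f :: "real^3 \<Rightarrow> real" and p :: "real^3"
  assumes U: "open U" "p \<in> U"
    and smooth: "smooth_on X0 U" "smooth_on X1 U" "smooth_on X2 U"
    and frame: "\<forall>x\<in>U. \<forall>a b. a *\<^sub>R X1 x + b *\<^sub>R X2 x = 0 \<longrightarrow> a = 0 \<and> b = 0"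
    and transverse: "\<forall>x\<in>U. X0 x \<notin> span {X1 x, X2 x}"
    and contact: "\<forall>x\<in>U. lie X1 X2 x \<notin> span {X1 x, X2 x}"
    and f_C2: "Ck_on 2 f U"
    and submersion: "\<forall>x\<in>U. \<exists>v. dderiv f x v \<noteq> 0"
    and p_in_S: "f p = 0"
    and characteristic: "tspace f p = span {X1 p, X2 p}"
  shows "\<forall>V Y1 Y2. open V \<and> p \<in> V \<and> V \<subseteq> U \<and> Ck_on 1 Y1 V \<and> Ck_on 1 Y2 V
           \<and> (\<forall>x\<in>V. f x = 0 \<longrightarrow> Y1 x \<in> tspace f x \<and> Y2 x \<in> tspace f x)
           \<and> (\<forall>a b. a *\<^sub>R Y1 p + b *\<^sub>R Y2 p = 0 \<longrightarrow> a = 0 \<and> b = 0)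
         \<longrightarrow> (\<lambda>eps. detII (gmetric eps X0 X1 X2) f Y1 Y2 p
               - (1 / eps^2) * (detHessH f X1 X2 p / (vf_app X0 f p)^2 - (c012 X0 X1 X2 p)^2 / 4))
             \<in> O[at_right 0](\<lambda>_. 1)"
proof (intro allI impI, elim conjE)
  txt \<open>Only first and second derivatives at \<open>p\<close> enter.\<close>
  fix V Y1 Y2
  assume V: "open V" "p \<in> V" "V \<subseteq> U" and Y: "Ck_on 1 Y1 V" "Ck_on 1 Y2 V"
    "\<forall>x\<in>V. f x = 0 \<longrightarrow> Y1 x \<in> tspace f x \<and> Y2 x \<in> tspace f x"
    "\<forall>a b. a *\<^sub>R Y1 p + b *\<^sub>R Y2 p = 0 \<longrightarrow> a = 0 \<and> b = 0"
  have "Ck_on (Suc 0) X0 U" "Ck_on (Suc 0) X1 U" "Ck_on (Suc 0) X2 U"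
    using smooth unfolding smooth_on_def by blast+
  then interpret characteristic_point_tangent_frame U X0 X1 X2 f p V Y1 Y2
    using U frame transverse f_C2 p_in_S characteristic V Y
    by unfold_locales (auto simp: numeral_2_eq_2)
  obtain R11 R12 R22 where R: "\<forall>eps>0.
     second_form eps (X1 p) (X1 p) = - sym_hess X1 X1 + eps^2 * R11
     \<and> second_form eps (X1 p) (X2 p) = - sym_hess X1 X2 + eps^2 * R12
     \<and> second_form eps (X2 p) (X2 p) = - sym_hess X2 X2 + eps^2 * R22"
    using second_form_frame by blast
  show "(\<lambda>eps. detII (gmetric eps X0 X1 X2) f Y1 Y2 p
      - (1 / eps^2) * (detHessH f X1 X2 p / X0f^2 - (c012 X0 X1 X2 p)^2 / 4)) \<in> O[at_right 0](\<lambda>_. 1)"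
  proof (rule bigo_at_right_0_const_plus_square, intro allI impI)
    fix eps :: real assume eps: "eps > 0"
    then have S: "second_form eps (X1 p) (X1 p) = - sym_hess X1 X1 + eps^2 * R11"
      "second_form eps (X1 p) (X2 p) = - sym_hess X1 X2 + eps^2 * R12"
      "second_form eps (X2 p) (X2 p) = - sym_hess X2 X2 + eps^2 * R22"
      using R by auto
    show "detII (gmetric eps X0 X1 X2) f Y1 Y2 p
        - (1 / eps^2) * (detHessH f X1 X2 p / X0f^2 - (c012 X0 X1 X2 p)^2 / 4)
      = (2 * sym_hess X1 X2 * R12 - sym_hess X1 X1 * R22 - R11 * sym_hess X2 X2) / X0f^2
        + eps^2 * ((R11 * R22 - R12^2) / X0f^2)"
      unfolding detII_gmetric[OF eps] leading_coefficient S using eps X0f_nonzero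
      by (simp add: field_simps power2_eq_square)
  qed
qed

end
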